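(* Let $n\ge1$ and let $U\in\mathcal{C}_2^{(n)}$ be a Clifford unitary such that for some integer $t\ge 0$, $U^{2^t}$ is a scalar multiple of an element of $\mathcal{P}_n$. Then the projective Pauli periodicity $m$ of $U$ satisfies $$m\le\lceil\log_2(2n)\rceil.$$ Moreover, this bound is tight: for every $n>1$ there exists a Clifford unitary $U\in\mathcal{C}_2^{(n)}$ whose projective Pauli periodicity is exactly $\lceil\log_2(2n)\rceil$; multiplying it by a suitable global phase, one may moreover take $U^{2^{\lceil\log_2(2n)\rceil}}\in\mathcal{P}_n$, so that its Pauli periodicity is also exactly $\lceil\log_2(2n)\rceil$.
   Context: The $n$-qubit Pauli group is $\mathcal{P}_n=\{\omega P_1\otimes\cdots\otimes P_n:\ \omega\in\{\pm1,\pm \mathrm{i}\},\ P_j\in\{I,X,Y,Z\}\}$. The Clifford group is $\mathcal{C}_2^{(n)}=\{U\in U(2^n):\ UPU^\dagger\in\mathcal{P}_n\ \forall P\in\mathcal{P}_n\}$. The Pauli periodicity of $U$ is $\min\{t\ge 0:\ U^{2^t}\in\mathcal{P}_n\}$ (exact membership). The projective Pauli periodicity of $U$ is $\min\{t\ge0:\ U^{2^t}=cP\text{ for some }c\in\mathbb{C},|c|=1,P\in\mathcal{P}_n\}$. *)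

theory Defs
  imports Complex_Main "Jordan_Normal_Form.Matrix"
begin

text \<open>Single-qubit Pauli matrices, indexed 0 = I, 1 = X, 2 = Y, 3 = Z.\<close>
definition pauli1 :: "nat \<Rightarrow> complex mat" where
  "pauli1 a = (if a = 0 then mat_of_rows_list 2 [[1, 0], [0, 1]]
               else if a = 1 then mat_of_rows_list 2 [[0, 1], [1, 0]]
               else if a = 2 then mat_of_rows_list 2 [[0, -\<i>], [\<i>, 0]]
               else mat_of_rows_list 2 [[1, 0], [0, -1]])"

text \<open>The n-fold tensor product P_{p 0} (x) ... (x) P_{p (n-1)}, a 2^n x 2^n matrix;
  the basis index i corresponds to the bit string (i div 2^k mod 2)_{k<n}.\<close>
definition pauli_string :: "nat \<Rightarrow> (nat \<Rightarrow> nat) \<Rightarrow> complex mat" where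
  "pauli_string n p = mat (2^n) (2^n)
     (\<lambda>(i, j). \<Prod>k<n. pauli1 (p k) $$ (i div 2^k mod 2, j div 2^k mod 2))"

definition pauli_group :: "nat \<Rightarrow> complex mat set" where
  "pauli_group n = {\<omega> \<cdot>\<^sub>m pauli_string n p | \<omega> p.
       \<omega> \<in> {1, -1, \<i>, -\<i>} \<and> (\<forall>k<n. p k < 4)}"

definition adjoint_mat :: "complex mat \<Rightarrow> complex mat" where
  "adjoint_mat A = mat (dim_col A) (dim_row A) (\<lambda>(i, j). cnj (A $$ (j, i)))"

definition unitary_mat :: "nat \<Rightarrow> complex mat \<Rightarrow> bool" where
  "unitary_mat d U \<longleftrightarrow> U \<in> carrier_mat d d \<and> U * adjoint_mat U = 1\<^sub>m d"

definition clifford_group :: "nat \<Rightarrow> complex mat set" where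
  "clifford_group n = {U. unitary_mat (2^n) U \<and>
       (\<forall>P \<in> pauli_group n. U * P * adjoint_mat U \<in> pauli_group n)}"

definition proj_pauli :: "nat \<Rightarrow> complex mat \<Rightarrow> bool" where
  "proj_pauli n A \<longleftrightarrow> (\<exists>c P. cmod c = 1 \<and> P \<in> pauli_group n \<and> A = c \<cdot>\<^sub>m P)"

definition pauli_periodicity :: "nat \<Rightarrow> complex mat \<Rightarrow> nat" where
  "pauli_periodicity n U = (LEAST t. U ^\<^sub>m (2^t) \<in> pauli_group n)"

definition proj_pauli_periodicity :: "nat \<Rightarrow> complex mat \<Rightarrow> nat" where
  "proj_pauli_periodicity n U = (LEAST t. proj_pauli n (U ^\<^sub>m (2^t)))"

end

theory Submission
  imports Defs "Jordan_Normal_Form.Determinant"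
begin

text \<open>Conjugation by a Clifford unitary \<open>U\<close> permutes the Pauli labels \<open>(a, b) \<in> \<bbbF>\<^sub>2\<^sup>2\<^sup>n\<close> up to
  phases, through an \<open>\<bbbF>\<^sub>2\<close>-linear map \<open>f\<close>. A unitary commuting with every Pauli up to a phase is
  itself a Pauli up to a phase, so \<open>U\<^sup>2\<^sup>^\<^sup>t\<close> is projectively Pauli iff \<open>f\<^sup>2\<^sup>^\<^sup>t = id\<close>, i.e. iff
  \<open>(f + id)\<^sup>2\<^sup>^\<^sup>t = 0\<close> in characteristic 2. A nilpotent map on a space of dimension \<open>2n\<close> already
  vanishes at its \<open>2n\<close>-th power, which gives the bound. For tightness take the phased permutation
  \<open>|j\<rangle> \<mapsto> \<i>^(y\<^sub>n\<^sub>-\<^sub>1) |y\<rangle>\<close>, \<open>y = j XOR 2j mod 2\<^sup>n\<close>: the kernel of \<open>f + id\<close> is one-dimensional,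
  so the kernel of \<open>(f + id)\<^sup>k\<close> has at most \<open>2\<^sup>k\<close> elements and \<open>(f + id)\<^sup>2\<^sup>^\<^sup>t = 0\<close> forces
  \<open>2\<^sup>t \<ge> 2n\<close>; its \<open>2\<^sup>m\<close>-th power is computed explicitly to be a diagonal Pauli operator.\<close>

unbundle bit_operations_syntax

lemma bit_imp_less_exp: "(x::nat) < 2^n \<Longrightarrow> bit x k \<Longrightarrow> k < n"
  by (metis bit_take_bit_iff take_bit_nat_eq_self_iff)

lemma xor_less_exp: "(x::nat) < 2^n \<Longrightarrow> y < 2^n \<Longrightarrow> x XOR y < 2^n"
  by (metis take_bit_nat_eq_self_iff take_bit_xor)

lemma nat_eq_if_low_bits_eq:
  "(x::nat) < 2^n \<Longrightarrow> y < 2^n \<Longrightarrow> (\<And>k. k < n \<Longrightarrow> bit x k = bit y k) \<Longrightarrow> x = y"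
  by (rule bit_eqI) (metis bit_imp_less_exp)

lemma xor_exp_less: "bit (y::nat) k \<Longrightarrow> y XOR 2^k < y"
proof -
  assume k: "bit y k"
  have "(y XOR 2^k) + 2^k = (y XOR 2^k) OR 2^k"
    using k by (intro disjunctive_add_eq_or bit_eqI) (auto simp: bit_simps)
  also have "\<dots> = y"
    using k by (auto intro!: bit_eqI simp: bit_simps)
  finally show ?thesis
    by (metis less_add_same_cancel1 zero_less_numeral zero_less_power)
qed

lemma xor_xor_cancel[simp]: "((x::nat) XOR a) XOR a = x"
  by (simp add: xor.assoc)

lemma eq_xor_swap: "(i::nat) = l XOR a \<longleftrightarrow> l = i XOR a"
  by (metis xor_xor_cancel)

definition of_bits :: "nat \<Rightarrow> (nat \<Rightarrow> bool) \<Rightarrow> nat" where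
  "of_bits n f = horner_sum of_bool 2 (map f [0..<n])"

lemma bit_of_bits: "bit (of_bits n f) k \<longleftrightarrow> k < n \<and> f k"
  by (auto simp: of_bits_def bit_horner_sum_bit_iff)

lemma of_bits_less: "of_bits n f < 2^n"
  using horner_sum_of_bool_2_less[of "map f [0..<n]"] by (simp add: of_bits_def)

definition signb :: "bool \<Rightarrow> complex" where
  "signb b = (if b then -1 else 1)"

lemma signb_simps[simp]:
  "signb False = 1" "signb True = -1" "signb a * signb a = 1" "cnj (signb a) = signb a" "signb a \<noteq> 0"
  by (auto simp: signb_def)

lemma signb_eq_iff: "signb a = signb b \<longleftrightarrow> a = b"
  by (auto simp: signb_def)

lemma signb_xor: "signb (a \<noteq> b) = signb a * signb b"
  by (auto simp: signb_def)

text \<open>The character \<open>y \<mapsto> (-1)^(c \<cdot> y)\<close> of \<open>\<bbbF>\<^sub>2\<^sup>n\<close>, bit strings being encoded as naturals.\<close>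
definition chi :: "nat \<Rightarrow> nat \<Rightarrow> nat \<Rightarrow> complex" where
  "chi n c y = (\<Prod>k<n. signb (bit c k \<and> bit y k))"

lemma chi_xor_right: "chi n c (y XOR z) = chi n c y * chi n c z"
  unfolding chi_def prod.distrib[symmetric] by (rule prod.cong) (auto simp: bit_simps signb_def)

lemma chi_xor_left: "chi n (c XOR d) y = chi n c y * chi n d y"
  unfolding chi_def prod.distrib[symmetric] by (rule prod.cong) (auto simp: bit_simps signb_def)

lemma chi_commute: "chi n c y = chi n y c"
  unfolding chi_def by (simp add: conj_commute)

lemma chi_simps[simp]:
  "chi n c 0 = 1" "chi n 0 y = 1" "chi n c y * chi n c y = 1" "chi n c y \<noteq> 0"
  "cnj (chi n c y) = chi n c y"
  by (auto simp: chi_def prod.distrib[symmetric])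

lemma chi_cases: "chi n c y = 1 \<or> chi n c y = -1"
  using chi_simps(3)[of n c y] square_eq_1_iff by blast

lemma chi_exp: "k < n \<Longrightarrow> chi n c (2^k) = signb (bit c k)"
proof -
  assume k: "k < n"
  have "chi n c (2^k) = (\<Prod>l<n. if l = k then signb (bit c k) else 1)"
    unfolding chi_def by (rule prod.cong) (auto simp: bit_simps)
  with k show ?thesis by simp
qed

lemma chi_exp_left: "k < n \<Longrightarrow> chi n (2^k) y = signb (bit y k)"
  by (simp add: chi_commute[of n "2^k"] chi_exp)

lemma flip_sign_imp_chi:
  fixes g :: "nat \<Rightarrow> complex"
  assumes flip: "\<And>y k. y < 2^n \<Longrightarrow> k < n \<Longrightarrow> g (y XOR 2^k) = s k * g y"
    and sign: "\<And>k. k < n \<Longrightarrow> s k = 1 \<or> s k = -1"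
  shows "y < 2^n \<Longrightarrow> g y = g 0 * chi n (of_bits n (\<lambda>k. s k = -1)) y"
proof (induction y rule: less_induct)
  case (less y)
  let ?c = "of_bits n (\<lambda>k. s k = -1)"
  show ?case
  proof (cases "y = 0")
    case False
    then obtain k where k: "bit y k"
      by (auto simp: bit_eq_iff[of y 0])
    have kn: "k < n" using bit_imp_less_exp[OF less.prems k] .
    let ?y = "y XOR 2^k"
    have "?y < y" using xor_exp_less[OF k] .
    moreover have y': "?y < 2^n" using \<open>?y < y\<close> less.prems by simp
    ultimately have IH: "g ?y = g 0 * chi n ?c ?y" using less.IH by blast
    have "chi n ?c (2^k) = s k"
      using sign[OF kn] kn by (auto simp: chi_exp bit_of_bits)
    then have "chi n ?c y = chi n ?c ?y * s k"
      by (metis chi_xor_right xor_xor_cancel)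
    moreover have "g y = s k * g ?y"
      using flip[OF y' kn] by simp
    ultimately show ?thesis using IH by simp
  qed simp
qed

lemma index_mult_mat_sum:
  "A \<in> carrier_mat r m \<Longrightarrow> B \<in> carrier_mat m c \<Longrightarrow> i < r \<Longrightarrow> j < c \<Longrightarrow>
   (A * B) $$ (i, j) = (\<Sum>l<m. A $$ (i, l) * B $$ (l, j))"
  by (simp add: scalar_prod_def lessThan_atLeast0)

lemma sum_lessThan_mult_delta:
  fixes N :: nat and c :: "'a :: comm_semiring_1"
  assumes "p < N"
  shows "(\<Sum>l<N. f l * (if l = p then c else 0)) = f p * c"
    and "(\<Sum>l<N. (if l = p then c else 0) * f l) = c * f p"
  using assms by (simp_all add: if_distrib[of "\<lambda>x. _ * x"] if_distrib[of "\<lambda>x. x * _"] cong: if_cong)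

lemma mult_carrier_mat_square[simp]:
  "A \<in> carrier_mat d d \<Longrightarrow> B \<in> carrier_mat d d \<Longrightarrow> A * B \<in> carrier_mat d d"
  by (rule mult_carrier_mat)

lemma one_smult_mat[simp]: "(1 :: 'a :: semiring_1) \<cdot>\<^sub>m A = A"
  by (intro eq_matI) auto

lemma smult_smult_mat: "x \<cdot>\<^sub>m (y \<cdot>\<^sub>m (A :: 'a :: comm_ring mat)) = (x * y) \<cdot>\<^sub>m A"
  by (intro eq_matI) (auto simp: mult.assoc)

lemma smult_mult_smult:
  "A \<in> carrier_mat r m \<Longrightarrow> B \<in> carrier_mat m c \<Longrightarrow>
   (x \<cdot>\<^sub>m A) * (y \<cdot>\<^sub>m B) = (x * y) \<cdot>\<^sub>m (A * (B :: 'a :: comm_ring mat))"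
  by (simp add: mult_smult_assoc_mat[of A r m "y \<cdot>\<^sub>m B" c] mult_smult_distrib[of A r m B c]
      smult_smult_mat)

lemma index_adjoint_mat[simp]:
  "i < dim_col A \<Longrightarrow> j < dim_row A \<Longrightarrow> adjoint_mat A $$ (i, j) = cnj (A $$ (j, i))"
  "dim_row (adjoint_mat A) = dim_col A" "dim_col (adjoint_mat A) = dim_row A"
  by (auto simp: adjoint_mat_def)

lemma adjoint_mat_carrier[simp]: "A \<in> carrier_mat r c \<Longrightarrow> adjoint_mat A \<in> carrier_mat c r"
  by (rule carrier_matI) auto

lemma adjoint_mat_mult:
  assumes "A \<in> carrier_mat r m" "B \<in> carrier_mat m c"
  shows "adjoint_mat (A * B) = adjoint_mat B * adjoint_mat A"
proof (rule eq_matI)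
  fix i j assume "i < dim_row (adjoint_mat B * adjoint_mat A)" "j < dim_col (adjoint_mat B * adjoint_mat A)"
  then have i: "i < c" and j: "j < r" using assms by auto
  have "adjoint_mat (A * B) $$ (i, j) = cnj (\<Sum>l<m. A $$ (j, l) * B $$ (l, i))"
    using assms i j by (simp add: index_mult_mat_sum[OF assms j i])
  also have "\<dots> = (\<Sum>l<m. adjoint_mat B $$ (i, l) * adjoint_mat A $$ (l, j))"
    using assms i j by (auto intro!: sum.cong simp: mult.commute)
  also have "\<dots> = (adjoint_mat B * adjoint_mat A) $$ (i, j)"
    using assms i j by (subst index_mult_mat_sum[of _ c m _ r]) auto
  finally show "adjoint_mat (A * B) $$ (i, j) = (adjoint_mat B * adjoint_mat A) $$ (i, j)" .
qed (use assms in auto)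

lemma adjoint_mat_smult: "adjoint_mat (x \<cdot>\<^sub>m A) = cnj x \<cdot>\<^sub>m adjoint_mat A"
  by (intro eq_matI) auto

lemma adjoint_mat_one[simp]: "adjoint_mat (1\<^sub>m n) = 1\<^sub>m n"
  by (intro eq_matI) auto

lemma unitary_mat_left_inverse:
  "unitary_mat d U \<Longrightarrow> adjoint_mat U * U = 1\<^sub>m d"
  unfolding unitary_mat_def using mat_mult_left_right_inverse[of U d "adjoint_mat U"] by simp

lemma unitary_mat_pow: "unitary_mat d U \<Longrightarrow> unitary_mat d (U ^\<^sub>m k)"
proof (induction k)
  case (Suc k)
  then have U: "U \<in> carrier_mat d d" "U * adjoint_mat U = 1\<^sub>m d"
    and IH: "U ^\<^sub>m k * adjoint_mat (U ^\<^sub>m k) = 1\<^sub>m d"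
    by (auto simp: unitary_mat_def)
  define V where "V = adjoint_mat (U ^\<^sub>m k)"
  have V: "V \<in> carrier_mat d d" using U by (simp add: V_def)
  have "U * (adjoint_mat U * V) = V"
    using U V by (simp flip: assoc_mult_mat[of U d d "adjoint_mat U" d V d])
  then have "U ^\<^sub>m k * U * (adjoint_mat U * V) = U ^\<^sub>m k * V"
    using U V by (subst assoc_mult_mat[of "U ^\<^sub>m k" d d U d "adjoint_mat U * V" d]) auto
  with U IH show ?case
    by (simp add: unitary_mat_def adjoint_mat_mult[of _ d d _ d] V_def mult_carrier_mat[of _ d d _ d])
qed (auto simp: unitary_mat_def)

section \<open>Pauli operators\<close>

text \<open>\<open>XZ n (a, b)\<close> is the Pauli operator \<open>X\<^sup>a Z\<^sup>b\<close>, mapping \<open>|j\<rangle>\<close> to \<open>(-1)^(b \<cdot> j) |j XOR a\<rangle>\<close>.\<close>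
definition XZ :: "nat \<Rightarrow> nat \<times> nat \<Rightarrow> complex mat" where
  "XZ n v = mat (2^n) (2^n) (\<lambda>(i, j). if i = j XOR fst v then chi n (snd v) j else 0)"

definition labels :: "nat \<Rightarrow> (nat \<times> nat) set" where
  "labels n = {..<2^n} \<times> {..<2^n}"

definition lxor :: "nat \<times> nat \<Rightarrow> nat \<times> nat \<Rightarrow> nat \<times> nat" where
  "lxor v w = (fst v XOR fst w, snd v XOR snd w)"

lemma finite_labels[simp]: "finite (labels n)"
  by (simp add: labels_def)

lemma card_labels: "card (labels n) = 2^(2*n)"
  by (simp add: labels_def card_cartesian_product power_add[symmetric] mult_2)

lemma zero_in_labels[simp]: "(0, 0) \<in> labels n"
  by (simp add: labels_def)

lemma lxor_in_labels[simp]: "v \<in> labels n \<Longrightarrow> w \<in> labels n \<Longrightarrow> lxor v w \<in> labels n"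
  by (auto simp: labels_def lxor_def intro: xor_less_exp)

lemma lxor_simps[simp]:
  "lxor v (0, 0) = v" "lxor (0, 0) v = v" "lxor v v = (0, 0)"
  "lxor (lxor u v) v = u" "lxor v (lxor v u) = u"
  by (simp_all add: lxor_def flip: xor.assoc)

lemma lxor_assoc: "lxor (lxor u v) w = lxor u (lxor v w)"
  by (simp add: lxor_def xor.assoc)

lemma lxor_commute: "lxor u v = lxor v u"
  by (simp add: lxor_def xor.commute)

lemma lxor_eq_zero_iff: "lxor u v = (0, 0) \<longleftrightarrow> u = v"
  by (metis lxor_simps(3,4))

lemma XZ_carrier[simp]: "XZ n v \<in> carrier_mat (2^n) (2^n)"
  and dim_XZ[simp]: "dim_row (XZ n v) = 2^n" "dim_col (XZ n v) = 2^n"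
  by (auto simp: XZ_def)

lemma index_XZ:
  "i < 2^n \<Longrightarrow> j < 2^n \<Longrightarrow> XZ n v $$ (i, j) = (if i = j XOR fst v then chi n (snd v) j else 0)"
  by (simp add: XZ_def)

lemma index_mult_XZ_right:
  assumes W: "W \<in> carrier_mat (2^n) (2^n)" and ij: "i < 2^n" "j < 2^n" and v: "v \<in> labels n"
  shows "(W * XZ n v) $$ (i, j) = W $$ (i, j XOR fst v) * chi n (snd v) j"
proof -
  have j': "j XOR fst v < 2^n" using v ij by (auto simp: labels_def intro: xor_less_exp)
  have "(W * XZ n v) $$ (i, j) = (\<Sum>l<2^n. W $$ (i, l) * XZ n v $$ (l, j))"
    by (rule index_mult_mat_sum[OF W XZ_carrier ij])
  also have "\<dots> = (\<Sum>l<2^n. W $$ (i, l) * (if l = j XOR fst v then chi n (snd v) j else 0))"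
    using ij by (intro sum.cong refl) (simp add: index_XZ)
  also have "\<dots> = W $$ (i, j XOR fst v) * chi n (snd v) j"
    using j' by (rule sum_lessThan_mult_delta)
  finally show ?thesis .
qed

lemma index_mult_XZ_left:
  assumes W: "W \<in> carrier_mat (2^n) (2^n)" and ij: "i < 2^n" "j < 2^n" and v: "v \<in> labels n"
  shows "(XZ n v * W) $$ (i, j) = chi n (snd v) (i XOR fst v) * W $$ (i XOR fst v, j)"
proof -
  have i': "i XOR fst v < 2^n" using v ij by (auto simp: labels_def intro: xor_less_exp)
  have "(XZ n v * W) $$ (i, j) = (\<Sum>l<2^n. XZ n v $$ (i, l) * W $$ (l, j))"
    by (rule index_mult_mat_sum[OF XZ_carrier W ij])
  also have "\<dots> = (\<Sum>l<2^n. (if l = i XOR fst v then chi n (snd v) (i XOR fst v) else 0) * W $$ (l, j))"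
    using ij by (intro sum.cong refl) (auto simp: index_XZ eq_xor_swap)
  also have "\<dots> = chi n (snd v) (i XOR fst v) * W $$ (i XOR fst v, j)"
    using i' by (rule sum_lessThan_mult_delta)
  finally show ?thesis .
qed

lemma XZ_zero: "XZ n (0, 0) = 1\<^sub>m (2^n)"
  by (intro eq_matI) (auto simp: index_XZ)

lemma XZ_mult:
  assumes v: "v \<in> labels n" and w: "w \<in> labels n"
  shows "XZ n v * XZ n w = chi n (snd v) (fst w) \<cdot>\<^sub>m XZ n (lxor v w)"
proof (rule eq_matI)
  fix i j assume "i < dim_row (chi n (snd v) (fst w) \<cdot>\<^sub>m XZ n (lxor v w))"
    "j < dim_col (chi n (snd v) (fst w) \<cdot>\<^sub>m XZ n (lxor v w))"
  then have i: "i < 2^n" and j: "j < 2^n" by auto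
  have j': "j XOR fst w < 2^n" using w j by (auto simp: labels_def intro: xor_less_exp)
  have "(XZ n v * XZ n w) $$ (i, j) = XZ n v $$ (i, j XOR fst w) * chi n (snd w) j"
    by (rule index_mult_XZ_right[OF XZ_carrier i j w])
  also have "\<dots> = (chi n (snd v) (fst w) \<cdot>\<^sub>m XZ n (lxor v w)) $$ (i, j)"
    using i j j' by (simp add: index_XZ lxor_def chi_xor_left chi_xor_right xor.assoc xor.commute
        xor.left_commute mult_ac)
  finally show "(XZ n v * XZ n w) $$ (i, j) = (chi n (snd v) (fst w) \<cdot>\<^sub>m XZ n (lxor v w)) $$ (i, j)" .
qed auto

lemma adjoint_XZ:
  assumes "v \<in> labels n"
  shows "adjoint_mat (XZ n v) = chi n (snd v) (fst v) \<cdot>\<^sub>m XZ n v"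
proof (rule eq_matI)
  fix i j assume "i < dim_row (chi n (snd v) (fst v) \<cdot>\<^sub>m XZ n v)" "j < dim_col (chi n (snd v) (fst v) \<cdot>\<^sub>m XZ n v)"
  then have "i < 2^n" "j < 2^n" by auto
  then show "adjoint_mat (XZ n v) $$ (i, j) = (chi n (snd v) (fst v) \<cdot>\<^sub>m XZ n v) $$ (i, j)"
    by (auto simp: index_XZ chi_xor_right mult_ac)
qed auto

lemma XZ_unitary: "v \<in> labels n \<Longrightarrow> XZ n v * adjoint_mat (XZ n v) = 1\<^sub>m (2^n)"
  by (simp add: adjoint_XZ mult_smult_distrib[of _ "2^n" "2^n" _ "2^n"] XZ_mult XZ_zero smult_smult_mat)

lemma smult_XZ_inj:
  assumes v: "v \<in> labels n" and w: "w \<in> labels n" and "x \<noteq> 0"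
    and eq: "x \<cdot>\<^sub>m XZ n v = y \<cdot>\<^sub>m XZ n w"
  shows "v = w \<and> x = y"
proof -
  have entry: "x * XZ n v $$ (i, j) = y * XZ n w $$ (i, j)" if "i < 2^n" "j < 2^n" for i j
    using arg_cong[OF eq, of "\<lambda>M. M $$ (i, j)"] that by simp
  have "fst v < 2^n" "fst w < 2^n" "snd v < 2^n" "snd w < 2^n"
    using v w by (auto simp: labels_def)
  with entry[of "fst v" 0] \<open>x \<noteq> 0\<close> have fst: "fst v = fst w" and "x = y"
    by (auto simp: index_XZ split: if_splits)
  have "bit (snd v) k = bit (snd w) k" if k: "k < n" for k
  proof -
    have "(2::nat)^k < 2^n" "2^k XOR fst v < 2^n"
      using k \<open>fst v < 2^n\<close> by (auto intro: xor_less_exp)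
    with entry[of "2^k XOR fst v" "2^k"] fst \<open>x = y\<close> \<open>x \<noteq> 0\<close> have "chi n (snd v) (2^k) = chi n (snd w) (2^k)"
      by (simp add: index_XZ)
    with k show ?thesis by (auto simp: chi_exp signb_def split: if_splits)
  qed
  then have "snd v = snd w"
    using nat_eq_if_low_bits_eq \<open>snd v < 2^n\<close> \<open>snd w < 2^n\<close> by blast
  with fst \<open>x = y\<close> show ?thesis by (simp add: prod_eq_iff)
qed

definition phases :: "complex set" where
  "phases = {1, -1, \<i>, -\<i>}"

lemma phases_closed:
  "1 \<in> phases" "x \<in> phases \<Longrightarrow> y \<in> phases \<Longrightarrow> x * y \<in> phases" "x \<in> phases \<Longrightarrow> cnj x \<in> phases"
  by (auto simp: phases_def)

lemma phases_norm: "x \<in> phases \<Longrightarrow> cmod x = 1"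
  by (auto simp: phases_def)

lemma phases_cnj_mult: "x \<in> phases \<Longrightarrow> cnj x * x = 1"
  by (auto simp: phases_def)

lemma prod_in_phases: "(\<And>k. k < n \<Longrightarrow> f k \<in> phases) \<Longrightarrow> (\<Prod>k<(n::nat). f k) \<in> phases"
  by (induction n) (auto intro: phases_closed)

text \<open>The index of \<open>X\<^sup>\<alpha> Z\<^sup>\<beta>\<close> among \<open>I, X, Y, Z\<close> in \<^const>\<open>pauli1\<close>, up to the phase \<open>Y = \<i> X Z\<close>.\<close>
definition pauli_index :: "bool \<Rightarrow> bool \<Rightarrow> nat" where
  "pauli_index \<alpha> \<beta> = (if \<alpha> then (if \<beta> then 2 else 1) else (if \<beta> then 3 else 0))"

lemma pauli1_pauli_index:
  "pauli1 (pauli_index \<alpha> \<beta>) $$ (of_bool p, of_bool q) =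
    (if \<alpha> \<and> \<beta> then \<i> else 1) * (if p = (q \<noteq> \<alpha>) then signb (\<beta> \<and> q) else 0)"
  by (cases p; cases q; cases \<alpha>; cases \<beta>) (auto simp: pauli1_def pauli_index_def mat_of_rows_list_def)

definition XZ_phase :: "nat \<Rightarrow> nat \<Rightarrow> nat \<Rightarrow> complex" where
  "XZ_phase n a b = (\<Prod>k<n. if bit a k \<and> bit b k then \<i> else 1)"

lemma XZ_phase_in_phases: "XZ_phase n a b \<in> phases"
  unfolding XZ_phase_def by (rule prod_in_phases) (auto simp: phases_def)

lemma eq_xor_iff_bits:
  fixes i j a :: nat
  assumes "i < 2^n" "j < 2^n" "a < 2^n"
  shows "(\<forall>k<n. bit i k = (bit j k \<noteq> bit a k)) \<longleftrightarrow> i = j XOR a"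
  using nat_eq_if_low_bits_eq[OF assms(1) xor_less_exp[OF assms(2,3)]] by (auto simp: bit_xor_iff)

lemma prod_lessThan_if_zero:
  "(\<Prod>k<(n::nat). if P k then f k else 0) = (if \<forall>k<n. P k then \<Prod>k<n. f k else (0::'a::comm_semiring_1))"
  by (induction n) (auto simp: less_Suc_eq)

lemma pauli_string_cong: "(\<And>k. k < n \<Longrightarrow> p k = q k) \<Longrightarrow> pauli_string n p = pauli_string n q"
  unfolding pauli_string_def by (intro eq_matI) auto

lemma pauli_string_eq_XZ:
  assumes a: "a < 2^n"
  shows "pauli_string n (\<lambda>k. pauli_index (bit a k) (bit b k)) = XZ_phase n a b \<cdot>\<^sub>m XZ n (a, b)"
proof (rule eq_matI)
  fix i j assume "i < dim_row (XZ_phase n a b \<cdot>\<^sub>m XZ n (a, b))" "j < dim_col (XZ_phase n a b \<cdot>\<^sub>m XZ n (a, b))"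
  then have i: "i < 2^n" and j: "j < 2^n" by auto
  have bits: "m div 2^k mod 2 = of_bool (bit m k)" for m k :: nat
    by (simp add: bit_iff_odd odd_iff_mod_2_eq_one)
  have "pauli_string n (\<lambda>k. pauli_index (bit a k) (bit b k)) $$ (i, j) =
     (\<Prod>k<n. (if bit a k \<and> bit b k then \<i> else 1) *
       (if bit i k = (bit j k \<noteq> bit a k) then signb (bit b k \<and> bit j k) else 0))"
    using i j by (simp add: pauli_string_def bits pauli1_pauli_index)
  also have "\<dots> = XZ_phase n a b * (if \<forall>k<n. bit i k = (bit j k \<noteq> bit a k) then chi n b j else 0)"
    by (simp only: prod.distrib prod_lessThan_if_zero XZ_phase_def chi_def)
  also have "\<dots> = (XZ_phase n a b \<cdot>\<^sub>m XZ n (a, b)) $$ (i, j)"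
    using i j a by (subst eq_xor_iff_bits[OF i j a]) (simp add: index_XZ)
  finally show "pauli_string n (\<lambda>k. pauli_index (bit a k) (bit b k)) $$ (i, j) =
      (XZ_phase n a b \<cdot>\<^sub>m XZ n (a, b)) $$ (i, j)" .
qed (auto simp: pauli_string_def)

lemma pauli_group_XZ: "pauli_group n = {w \<cdot>\<^sub>m XZ n v | w v. w \<in> phases \<and> v \<in> labels n}"
proof (intro equalityI subsetI)
  fix P assume "P \<in> pauli_group n"
  then obtain w p where w: "w \<in> phases" and p: "\<forall>k<n. p k < 4" and P: "P = w \<cdot>\<^sub>m pauli_string n p"
    unfolding pauli_group_def phases_def by blast
  define a where "a = of_bits n (\<lambda>k. p k = 1 \<or> p k = 2)"
  define b where "b = of_bits n (\<lambda>k. p k = 2 \<or> p k = 3)"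
  have a: "a < 2^n" and b: "b < 2^n" unfolding a_def b_def by (auto simp: of_bits_less)
  have "p k = pauli_index (bit a k) (bit b k)" if "k < n" for k
    using p that by (auto simp: a_def b_def bit_of_bits pauli_index_def)
  then have "pauli_string n p = pauli_string n (\<lambda>k. pauli_index (bit a k) (bit b k))"
    by (rule pauli_string_cong)
  then have "P = (w * XZ_phase n a b) \<cdot>\<^sub>m XZ n (a, b)"
    using P by (simp add: pauli_string_eq_XZ[OF a] smult_smult_mat)
  moreover have "w * XZ_phase n a b \<in> phases" using phases_closed(2)[OF w XZ_phase_in_phases] .
  ultimately show "P \<in> {w \<cdot>\<^sub>m XZ n v | w v. w \<in> phases \<and> v \<in> labels n}"
    using a b by (auto simp: labels_def)
next
  fix P assume "P \<in> {w \<cdot>\<^sub>m XZ n v | w v. w \<in> phases \<and> v \<in> labels n}"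
  then obtain w a b where w: "w \<in> phases" and a: "a < 2^n" and P: "P = w \<cdot>\<^sub>m XZ n (a, b)"
    by (auto simp: labels_def)
  have "P = (w * cnj (XZ_phase n a b)) \<cdot>\<^sub>m pauli_string n (\<lambda>k. pauli_index (bit a k) (bit b k))"
    using P by (simp add: pauli_string_eq_XZ[OF a] smult_smult_mat mult.assoc
        phases_cnj_mult[OF XZ_phase_in_phases])
  moreover have "w * cnj (XZ_phase n a b) \<in> phases"
    using phases_closed(2,3) w XZ_phase_in_phases by blast
  ultimately show "P \<in> pauli_group n"
    unfolding pauli_group_def phases_def by (force simp: pauli_index_def)
qed

lemma smult_XZ_in_pauli_group: "w \<in> phases \<Longrightarrow> v \<in> labels n \<Longrightarrow> w \<cdot>\<^sub>m XZ n v \<in> pauli_group n"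
  unfolding pauli_group_XZ by blast

section \<open>Linear maps on Pauli labels\<close>

definition xor_linear :: "nat \<Rightarrow> (nat \<times> nat \<Rightarrow> nat \<times> nat) \<Rightarrow> bool" where
  "xor_linear n f \<longleftrightarrow> (\<forall>v\<in>labels n. f v \<in> labels n) \<and>
     (\<forall>v\<in>labels n. \<forall>w\<in>labels n. f (lxor v w) = lxor (f v) (f w))"

lemma xor_linearD:
  "xor_linear n f \<Longrightarrow> v \<in> labels n \<Longrightarrow> f v \<in> labels n"
  "xor_linear n f \<Longrightarrow> v \<in> labels n \<Longrightarrow> w \<in> labels n \<Longrightarrow> f (lxor v w) = lxor (f v) (f w)"
  by (auto simp: xor_linear_def)

lemma xor_linear_zero: "xor_linear n f \<Longrightarrow> f (0, 0) = (0, 0)"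
  by (metis lxor_simps(3,4) xor_linearD(2) zero_in_labels)

lemma xor_linear_funpow: "xor_linear n f \<Longrightarrow> xor_linear n (f ^^ j)"
  by (induction j) (auto simp: xor_linear_def)

definition iter_kernel :: "nat \<Rightarrow> (nat \<times> nat \<Rightarrow> nat \<times> nat) \<Rightarrow> nat \<Rightarrow> (nat \<times> nat) set" where
  "iter_kernel n f j = {v \<in> labels n. (f ^^ j) v = (0, 0)}"

lemma iter_kernel_subset: "iter_kernel n f j \<subseteq> labels n"
  by (auto simp: iter_kernel_def)

lemma finite_iter_kernel[simp]: "finite (iter_kernel n f j)"
  using finite_subset[OF iter_kernel_subset] by simp

lemma iter_kernel_0: "iter_kernel n f 0 = {(0, 0)}"
  by (auto simp: iter_kernel_def)

lemma iter_kernel_Suc: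
  "xor_linear n f \<Longrightarrow> iter_kernel n f (Suc j) = {v \<in> labels n. f v \<in> iter_kernel n f j}"
  by (auto simp: iter_kernel_def funpow_Suc_right xor_linearD simp del: funpow.simps)

lemma lxor_in_iter_kernel:
  "xor_linear n f \<Longrightarrow> v \<in> iter_kernel n f j \<Longrightarrow> w \<in> iter_kernel n f j \<Longrightarrow> lxor v w \<in> iter_kernel n f j"
  using xor_linear_funpow[of n f j] by (auto simp: iter_kernel_def xor_linearD)

lemma iter_kernel_mono:
  assumes f: "xor_linear n f"
  shows "j \<le> l \<Longrightarrow> iter_kernel n f j \<subseteq> iter_kernel n f l"
proof (induction l rule: dec_induct)
  case (step l)
  have "iter_kernel n f l \<subseteq> iter_kernel n f (Suc l)"
    using xor_linear_zero[OF f] by (auto simp: iter_kernel_def)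
  with step.IH show ?case by blast
qed simp

lemma iter_kernel_stable:
  assumes f: "xor_linear n f" and eq: "iter_kernel n f (Suc j) = iter_kernel n f j"
  shows "j \<le> l \<Longrightarrow> iter_kernel n f l = iter_kernel n f j"
proof (induction l rule: dec_induct)
  case (step l)
  then show ?case using eq by (simp add: iter_kernel_Suc[OF f])
qed simp

lemma card_lxor_closed_psubset:
  assumes G: "finite G" and H: "\<And>v w. v \<in> H \<Longrightarrow> w \<in> H \<Longrightarrow> lxor v w \<in> H"
    and closed: "\<And>v w. v \<in> G \<Longrightarrow> w \<in> G \<Longrightarrow> lxor v w \<in> G" and "H \<subset> G"
  shows "2 * card H \<le> card G"
proof -
  obtain a where a: "a \<in> G" "a \<notin> H" using \<open>H \<subset> G\<close> by blast
  have fin: "finite H" using \<open>H \<subset> G\<close> G finite_subset by auto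
  have "lxor a w \<notin> H" if "w \<in> H" for w
    using H[OF _ that, of "lxor a w"] a(2) by auto
  then have disjoint: "H \<inter> lxor a ` H = {}" by blast
  have "inj_on (lxor a) H"
    by (rule inj_onI) (metis lxor_simps(5))
  then have "card (H \<union> lxor a ` H) = 2 * card H"
    using card_Un_disjoint[OF fin finite_imageI[OF fin] disjoint] by (simp add: card_image)
  moreover have "H \<union> lxor a ` H \<subseteq> G"
    using \<open>H \<subset> G\<close> closed a(1) by blast
  ultimately show ?thesis using card_mono[OF G] by (metis (no_types))
qed

text \<open>The kernels of the powers of \<open>f\<close> grow strictly, hence at least double, until they
  exhaust the \<open>2\<^sup>2\<^sup>n\<close> labels.\<close>
lemma xor_linear_nilpotent:
  assumes f: "xor_linear n f" and nil: "\<forall>v\<in>labels n. (f ^^ k) v = (0, 0)"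
  shows "\<forall>v\<in>labels n. (f ^^ (2 * n)) v = (0, 0)"
proof -
  let ?K = "iter_kernel n f"
  have all: "?K k = labels n" using nil by (auto simp: iter_kernel_def)
  have Suc_mono: "?K j \<subseteq> ?K (Suc j)" for j
    by (rule iter_kernel_mono[OF f]) simp
  have grow: "?K j \<subset> ?K (Suc j)" if "?K j \<noteq> labels n" for j
  proof -
    have "?K (Suc j) \<noteq> ?K j"
    proof
      assume "?K (Suc j) = ?K j"
      then have "?K (max j k) = ?K j" by (rule iter_kernel_stable[OF f]) simp
      moreover have "?K k \<subseteq> ?K (max j k)" by (rule iter_kernel_mono[OF f max.cobounded2])
      ultimately show False using all that iter_kernel_subset[of n f j] by blast
    qed
    with Suc_mono show ?thesis by blast
  qed
  have "?K j = labels n \<or> 2^j \<le> card (?K j)" for j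
  proof (induction j)
    case (Suc j)
    show ?case
    proof (cases "?K j = labels n")
      case True
      then show ?thesis using Suc_mono[of j] iter_kernel_subset[of n f "Suc j"] by blast
    next
      case False
      have "2 * card (?K j) \<le> card (?K (Suc j))"
        by (rule card_lxor_closed_psubset[OF finite_iter_kernel lxor_in_iter_kernel[OF f]
              lxor_in_iter_kernel[OF f] grow[OF False]])
      with False Suc.IH show ?thesis by simp
    qed
  qed (simp add: iter_kernel_0)
  then have "?K (2 * n) = labels n"
    using card_seteq[OF finite_labels iter_kernel_subset] card_labels by (metis (no_types))
  then show ?thesis by (auto simp: iter_kernel_def)
qed

lemma card_iter_kernel_le:
  assumes f: "xor_linear n f"
  shows "card (iter_kernel n f j) \<le> card (iter_kernel n f 1) ^ j"
proof (induction j)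
  case (Suc j)
  let ?K = "iter_kernel n f"
  define A where "A = ?K (Suc j)"
  have fibre: "card {v \<in> A. f v = y} \<le> card (?K 1)" for y
  proof (cases "\<exists>x \<in> A. f x = y")
    case True
    then obtain x where x: "x \<in> A" "f x = y" by blast
    have "{v \<in> A. f v = y} \<subseteq> lxor x ` ?K 1"
    proof
      fix v assume v: "v \<in> {v \<in> A. f v = y}"
      then have "lxor x v \<in> ?K 1"
        using x iter_kernel_subset f by (auto simp: A_def iter_kernel_def xor_linearD)
      then show "v \<in> lxor x ` ?K 1" by (metis image_eqI lxor_simps(5))
    qed
    then show ?thesis by (meson card_image_le card_mono finite_imageI finite_iter_kernel le_trans)
  next
    case False
    then have "{v \<in> A. f v = y} = {}" by auto
    then show ?thesis by (metis card.empty le0)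
  qed
  have "A = (\<Union>y \<in> f ` A. {v \<in> A. f v = y})" by blast
  then have "card A = card (\<Union>y \<in> f ` A. {v \<in> A. f v = y})" by (rule arg_cong)
  also have "\<dots> \<le> (\<Sum>y \<in> f ` A. card {v \<in> A. f v = y})"
    by (rule card_UN_le) (simp add: A_def)
  also have "\<dots> \<le> card (f ` A) * card (?K 1)"
    using sum_bounded_above[of "f ` A" "\<lambda>y. card {v \<in> A. f v = y}"] fibre by simp
  also have "card (f ` A) \<le> card (?K j)"
    unfolding A_def using iter_kernel_Suc[OF f] by (intro card_mono) auto
  finally have "card A \<le> card (?K j) * card (?K 1)" by simp
  with Suc.IH show ?case
    unfolding A_def by (metis mult_le_mono1 order_trans power_Suc2)
qed (simp add: iter_kernel_0)

definition plus_id :: "(nat \<times> nat \<Rightarrow> nat \<times> nat) \<Rightarrow> nat \<times> nat \<Rightarrow> nat \<times> nat" where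
  "plus_id f v = lxor (f v) v"

lemma lxor_lxor_swap: "lxor (lxor a b) (lxor c d) = lxor (lxor a c) (lxor b d)"
  by (simp add: lxor_def xor.assoc xor.left_commute)

lemma xor_linear_plus_id:
  assumes "xor_linear n f"
  shows "xor_linear n (plus_id f)"
  using xor_linearD[OF assms] unfolding xor_linear_def plus_id_def by (simp add: lxor_lxor_swap)

text \<open>Frobenius in characteristic 2: \<open>(f + id)\<^sup>2 = f\<^sup>2 + id\<close>.\<close>
lemma funpow_plus_id_exp2:
  assumes f: "xor_linear n f"
  shows "v \<in> labels n \<Longrightarrow> (plus_id f ^^ (2^s)) v = plus_id (f ^^ (2^s)) v"
proof (induction s arbitrary: v)
  case (Suc s)
  let ?g = "f ^^ (2^s)"
  have g: "xor_linear n ?g" by (rule xor_linear_funpow[OF f])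
  have double: "h ^^ (2^Suc s) = (h ^^ (2^s)) \<circ> (h ^^ (2^s))" for h :: "nat \<times> nat \<Rightarrow> nat \<times> nat"
    by (simp only: power_Suc mult_2 funpow_add)
  have inner: "(plus_id f ^^ (2^s)) v = plus_id ?g v" by (rule Suc.IH[OF Suc.prems])
  have "plus_id ?g v \<in> labels n"
    using xor_linearD(1)[OF xor_linear_funpow[OF xor_linear_plus_id[OF f]] Suc.prems] inner by metis
  then have "(plus_id f ^^ (2^Suc s)) v = plus_id ?g (plus_id ?g v)"
    by (simp only: double comp_apply inner Suc.IH)
  also have "\<dots> = plus_id (?g \<circ> ?g) v"
    using Suc.prems xor_linearD[OF g]
    by (simp add: plus_id_def lxor_assoc xor_linearD(2)[OF g, of "?g v" v])
  finally show ?case by (simp only: double)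
qed simp

section \<open>The label action of a Clifford unitary\<close>

definition conj_mat :: "complex mat \<Rightarrow> complex mat \<Rightarrow> complex mat" where
  "conj_mat U A = U * A * adjoint_mat U"

lemma conj_mat_mult:
  assumes U: "unitary_mat d U" and A: "A \<in> carrier_mat d d" and B: "B \<in> carrier_mat d d"
  shows "conj_mat U (A * B) = conj_mat U A * conj_mat U B"
proof -
  have Uc: "U \<in> carrier_mat d d" and U': "adjoint_mat U * U = 1\<^sub>m d"
    using U unitary_mat_left_inverse by (auto simp: unitary_mat_def)
  have "conj_mat U A * conj_mat U B = U * A * (adjoint_mat U * U) * B * adjoint_mat U"
    using Uc A B by (simp add: conj_mat_def assoc_mult_mat[of _ d d _ d _ d])
  with U' A B Uc show ?thesis by (simp add: conj_mat_def)
qed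

lemma conj_mat_smult:
  "U \<in> carrier_mat d d \<Longrightarrow> A \<in> carrier_mat d d \<Longrightarrow> conj_mat U (x \<cdot>\<^sub>m A) = x \<cdot>\<^sub>m conj_mat U A"
  by (simp add: conj_mat_def mult_smult_distrib[of _ d d _ d] mult_smult_assoc_mat[of _ d d _ d])

lemma conj_mat_smult_left:
  "U \<in> carrier_mat d d \<Longrightarrow> A \<in> carrier_mat d d \<Longrightarrow> conj_mat (x \<cdot>\<^sub>m U) A = (x * cnj x) \<cdot>\<^sub>m conj_mat U A"
  by (simp add: conj_mat_def adjoint_mat_smult mult_smult_distrib[of _ d d _ d]
      mult_smult_assoc_mat[of _ d d _ d] smult_smult_mat mult_ac)

lemma conj_mat_mult_left:
  "U \<in> carrier_mat d d \<Longrightarrow> V \<in> carrier_mat d d \<Longrightarrow> A \<in> carrier_mat d d \<Longrightarrow>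
   conj_mat (U * V) A = conj_mat U (conj_mat V A)"
  by (simp add: conj_mat_def adjoint_mat_mult[of _ d d _ d] assoc_mult_mat[of _ d d _ d _ d])

lemma mult_eq_conj_mat_mult:
  assumes "unitary_mat d U" "A \<in> carrier_mat d d"
  shows "U * A = conj_mat U A * U"
  using assms unitary_mat_left_inverse[OF assms(1)]
  by (simp add: unitary_mat_def conj_mat_def assoc_mult_mat[of _ d d _ d _ d])

lemma conj_mat_eq_smult_iff:
  assumes U: "unitary_mat d U" and A: "A \<in> carrier_mat d d" and B: "B \<in> carrier_mat d d"
  shows "conj_mat U A = x \<cdot>\<^sub>m B \<longleftrightarrow> U * A = x \<cdot>\<^sub>m (B * U)"
proof
  assume "conj_mat U A = x \<cdot>\<^sub>m B"
  then show "U * A = x \<cdot>\<^sub>m (B * U)"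
    using mult_eq_conj_mat_mult[OF U A] U B by (simp add: unitary_mat_def mult_smult_assoc_mat[of _ d d _ d])
next
  assume "U * A = x \<cdot>\<^sub>m (B * U)"
  then show "conj_mat U A = x \<cdot>\<^sub>m B"
    using U B by (simp add: conj_mat_def unitary_mat_def mult_smult_assoc_mat[of _ d d _ d]
        assoc_mult_mat[of _ d d _ d _ d])
qed

lemma clifford_group_unitary: "U \<in> clifford_group n \<Longrightarrow> unitary_mat (2^n) U"
  and clifford_group_carrier: "U \<in> clifford_group n \<Longrightarrow> U \<in> carrier_mat (2^n) (2^n)"
  by (auto simp: clifford_group_def unitary_mat_def)

definition conj_XZ :: "nat \<Rightarrow> complex mat \<Rightarrow> nat \<times> nat \<Rightarrow> nat \<times> nat \<Rightarrow> bool" where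
  "conj_XZ n U v w \<longleftrightarrow> (\<exists>x. x \<noteq> 0 \<and> conj_mat U (XZ n v) = x \<cdot>\<^sub>m XZ n w)"

lemma conj_XZ_unique:
  assumes "conj_XZ n U v w" "conj_XZ n U v w'" "w \<in> labels n" "w' \<in> labels n"
  shows "w = w'"
proof -
  obtain x x' where "x \<noteq> 0" "conj_mat U (XZ n v) = x \<cdot>\<^sub>m XZ n w" "conj_mat U (XZ n v) = x' \<cdot>\<^sub>m XZ n w'"
    using assms(1,2) unfolding conj_XZ_def by blast
  then have "x \<cdot>\<^sub>m XZ n w = x' \<cdot>\<^sub>m XZ n w'" by simp
  then show ?thesis using smult_XZ_inj[OF assms(3,4) \<open>x \<noteq> 0\<close>] by blast
qed

lemma clifford_conj_XZ_ex:
  assumes U: "U \<in> clifford_group n" and v: "v \<in> labels n"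
  shows "\<exists>w\<in>labels n. conj_XZ n U v w"
proof -
  have "XZ n v \<in> pauli_group n" using smult_XZ_in_pauli_group[OF phases_closed(1) v] by simp
  then have "conj_mat U (XZ n v) \<in> pauli_group n" using U by (simp add: clifford_group_def conj_mat_def)
  then obtain x w where "x \<in> phases" "w \<in> labels n" "conj_mat U (XZ n v) = x \<cdot>\<^sub>m XZ n w"
    unfolding pauli_group_XZ by blast
  moreover from \<open>x \<in> phases\<close> have "x \<noteq> 0" by (auto simp: phases_def)
  ultimately show ?thesis unfolding conj_XZ_def by blast
qed

text \<open>The symplectic matrix of \<open>U\<close>, acting on labels; phases are forgotten.\<close>
definition label_action :: "nat \<Rightarrow> complex mat \<Rightarrow> nat \<times> nat \<Rightarrow> nat \<times> nat" where
  "label_action n U v = (SOME w. w \<in> labels n \<and> conj_XZ n U v w)"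

lemma label_action:
  assumes "U \<in> clifford_group n" "v \<in> labels n"
  shows "label_action n U v \<in> labels n" "conj_XZ n U v (label_action n U v)"
  using someI_ex[OF clifford_conj_XZ_ex[OF assms, unfolded Bex_def]] unfolding label_action_def by auto

lemma label_action_eq:
  assumes "U \<in> clifford_group n" "v \<in> labels n" "w \<in> labels n" "conj_XZ n U v w"
  shows "label_action n U v = w"
  using conj_XZ_unique label_action[OF assms(1,2)] assms(3,4) by blast

lemma xor_linear_label_action:
  assumes U: "U \<in> clifford_group n"
  shows "xor_linear n (label_action n U)"
  unfolding xor_linear_def
proof (intro conjI ballI)
  fix v w assume v: "v \<in> labels n" and w: "w \<in> labels n"
  let ?v = "label_action n U v" and ?w = "label_action n U w"
  have Uu: "unitary_mat (2^n) U" and Uc: "U \<in> carrier_mat (2^n) (2^n)"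
    using U by (rule clifford_group_unitary, rule clifford_group_carrier)
  obtain x y where xy: "x \<noteq> 0" "conj_mat U (XZ n v) = x \<cdot>\<^sub>m XZ n ?v"
    "y \<noteq> 0" "conj_mat U (XZ n w) = y \<cdot>\<^sub>m XZ n ?w"
    using label_action(2)[OF U v] label_action(2)[OF U w] unfolding conj_XZ_def by blast
  have "XZ n (lxor v w) = chi n (snd v) (fst w) \<cdot>\<^sub>m (XZ n v * XZ n w)"
    using XZ_mult[OF v w] by (simp add: smult_smult_mat)
  then have "conj_mat U (XZ n (lxor v w)) =
      chi n (snd v) (fst w) \<cdot>\<^sub>m (conj_mat U (XZ n v) * conj_mat U (XZ n w))"
    by (simp add: conj_mat_smult[OF Uc] conj_mat_mult[OF Uu])
  also have "\<dots> = (chi n (snd v) (fst w) * x * y * chi n (snd ?v) (fst ?w)) \<cdot>\<^sub>m XZ n (lxor ?v ?w)"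
    using label_action(1)[OF U] v w
    by (simp add: xy smult_mult_smult[of _ "2^n" "2^n" _ "2^n"] XZ_mult smult_smult_mat mult_ac)
  finally have "conj_XZ n U (lxor v w) (lxor ?v ?w)"
    unfolding conj_XZ_def using xy(1,3) by (metis chi_simps(4) mult_eq_0_iff)
  then show "label_action n U (lxor v w) = lxor ?v ?w"
    using label_action(1)[OF U] v w by (intro label_action_eq[OF U]) auto
qed (rule label_action(1)[OF U])

lemma conj_XZ_pow:
  assumes U: "U \<in> clifford_group n"
  shows "v \<in> labels n \<Longrightarrow> conj_XZ n (U ^\<^sub>m k) v ((label_action n U ^^ k) v)"
proof (induction k arbitrary: v)
  case 0
  then show ?case
    using clifford_group_carrier[OF U] by (auto simp: conj_XZ_def conj_mat_def intro!: exI[of _ 1])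
next
  case (Suc k)
  have Uc: "U \<in> carrier_mat (2^n) (2^n)" by (rule clifford_group_carrier[OF U])
  obtain x where x: "x \<noteq> 0" "conj_mat U (XZ n v) = x \<cdot>\<^sub>m XZ n (label_action n U v)"
    using label_action(2)[OF U Suc.prems] unfolding conj_XZ_def by blast
  obtain y where y: "y \<noteq> 0"
    "conj_mat (U ^\<^sub>m k) (XZ n (label_action n U v)) = y \<cdot>\<^sub>m XZ n ((label_action n U ^^ k) (label_action n U v))"
    using Suc.IH[OF label_action(1)[OF U Suc.prems]] unfolding conj_XZ_def by blast
  have "conj_mat (U ^\<^sub>m Suc k) (XZ n v) = conj_mat (U ^\<^sub>m k) (conj_mat U (XZ n v))"
    using Uc by (simp add: conj_mat_mult_left[of _ "2^n"])
  also have "\<dots> = (x * y) \<cdot>\<^sub>m XZ n ((label_action n U ^^ Suc k) v)"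
    using Uc by (simp add: x(2) y(2) conj_mat_smult[of "U ^\<^sub>m k" "2^n"] smult_smult_mat
        funpow_Suc_right del: funpow.simps)
  finally show ?case unfolding conj_XZ_def using x(1) y(1) by (metis mult_eq_0_iff)
qed

lemma conj_XZ_XZ: "u \<in> labels n \<Longrightarrow> v \<in> labels n \<Longrightarrow> conj_XZ n (XZ n u) v v"
  unfolding conj_XZ_def conj_mat_def
  by (simp add: adjoint_XZ XZ_mult mult_smult_distrib[of _ "2^n" "2^n" _ "2^n"]
      mult_smult_assoc_mat[of _ "2^n" "2^n" _ "2^n"] smult_smult_mat lxor_commute[of u v])
    (metis chi_simps(4) mult_eq_0_iff)

lemma label_action_funpow_fixed:
  assumes U: "U \<in> clifford_group n" and P: "proj_pauli n (U ^\<^sub>m k)" and v: "v \<in> labels n"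
  shows "(label_action n U ^^ k) v = v"
proof -
  obtain c Q where c: "cmod c = 1" and "Q \<in> pauli_group n" and UQ: "U ^\<^sub>m k = c \<cdot>\<^sub>m Q"
    using P unfolding proj_pauli_def by blast
  then obtain w u where w: "w \<in> phases" and u: "u \<in> labels n" and "Q = w \<cdot>\<^sub>m XZ n u"
    unfolding pauli_group_XZ by blast
  with UQ have eq: "U ^\<^sub>m k = (c * w) \<cdot>\<^sub>m XZ n u" by (simp add: smult_smult_mat)
  obtain z where z: "z \<noteq> 0" "conj_mat (XZ n u) (XZ n v) = z \<cdot>\<^sub>m XZ n v"
    using conj_XZ_XZ[OF u v] unfolding conj_XZ_def by blast
  have "conj_mat (U ^\<^sub>m k) (XZ n v) = (c * w * cnj (c * w) * z) \<cdot>\<^sub>m XZ n v"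
    by (simp add: eq conj_mat_smult_left[of _ "2^n"] z(2) smult_smult_mat)
  moreover have "c * w * cnj (c * w) * z \<noteq> 0"
    using c z(1) phases_norm[OF w] by auto
  ultimately have "conj_XZ n (U ^\<^sub>m k) v v" unfolding conj_XZ_def by blast
  moreover have "(label_action n U ^^ k) v \<in> labels n"
    using xor_linearD(1)[OF xor_linear_funpow[OF xor_linear_label_action[OF U]] v] .
  ultimately show ?thesis using conj_XZ_unique conj_XZ_pow[OF U v] v by blast
qed

section \<open>Unitaries commuting projectively with all Pauli operators\<close>

text \<open>Commuting up to a phase with every \<open>Z\<^sub>k\<close> forces the phase to be \<open>(-1)^(i\<^sub>k + j\<^sub>k)\<close>
  for every nonzero entry \<open>(i, j)\<close>, so \<open>i XOR j\<close> is the same for all of them.\<close>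
lemma commuting_Z_support:
  assumes W: "W \<in> carrier_mat (2^n) (2^n)"
    and Z: "\<And>k. k < n \<Longrightarrow> \<exists>x. W * XZ n (0, 2^k) = x \<cdot>\<^sub>m (XZ n (0, 2^k) * W)"
    and ij: "i < 2^n" "j < 2^n" "W $$ (i, j) \<noteq> 0"
    and ij': "i' < 2^n" "j' < 2^n" "W $$ (i', j') \<noteq> 0"
  shows "i XOR j = i' XOR j'"
proof -
  have phase: "x = signb (bit i k \<noteq> bit j k)"
    if eq: "W * XZ n (0, 2^k) = x \<cdot>\<^sub>m (XZ n (0, 2^k) * W)" and k: "k < n"
      and "i < 2^n" "j < 2^n" "W $$ (i, j) \<noteq> 0" for x i j k
  proof -
    have lab: "(0, 2^k) \<in> labels n" using k by (simp add: labels_def)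
    have "W $$ (i, j) * signb (bit j k) = (W * XZ n (0, 2^k)) $$ (i, j)"
      using index_mult_XZ_right[OF W that(3,4) lab] k by (simp add: chi_exp_left)
    also have "\<dots> = x * (XZ n (0, 2^k) * W) $$ (i, j)"
      using that(3,4) W by (simp add: eq del: index_mult_mat(1))
    also have "\<dots> = x * (signb (bit i k) * W $$ (i, j))"
      using index_mult_XZ_left[OF W that(3,4) lab] k by (simp add: chi_exp_left)
    finally have "W $$ (i, j) * signb (bit j k) = x * (signb (bit i k) * W $$ (i, j))" .
    then have "signb (bit j k) = x * signb (bit i k)"
      using that(5) by (simp add: mult_ac)
    then have "signb (bit j k) * signb (bit i k) = x * (signb (bit i k) * signb (bit i k))"
      by (simp add: mult.assoc)
    then have "x = signb (bit i k) * signb (bit j k)" by (simp add: mult.commute)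
    then show ?thesis by (simp only: signb_xor)
  qed
  have "bit (i XOR j) k = bit (i' XOR j') k" if k: "k < n" for k
  proof -
    obtain x where "W * XZ n (0, 2^k) = x \<cdot>\<^sub>m (XZ n (0, 2^k) * W)" using Z[OF k] by blast
    from phase[OF this k ij] phase[OF this k ij'] show ?thesis
      by (simp add: signb_eq_iff bit_xor_iff)
  qed
  then show ?thesis
    by (rule nat_eq_if_low_bits_eq[OF xor_less_exp[OF ij(1,2)] xor_less_exp[OF ij'(1,2)]])
qed

text \<open>Commutation with \<open>Z\<^sub>k\<close> makes \<open>W\<close> a monomial matrix with a single permutation \<open>j \<mapsto> j XOR i\<^sub>0\<close>;
  commutation with \<open>X\<^sub>k\<close> makes its entries along that permutation a character up to scaling.\<close>
lemma commuting_XZ_imp_eq_smult_XZ: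
  assumes W: "W \<in> carrier_mat (2^n) (2^n)"
    and comm: "\<And>v. v \<in> labels n \<Longrightarrow> \<exists>x. W * XZ n v = x \<cdot>\<^sub>m (XZ n v * W)"
    and i0: "i0 < 2^n" "W $$ (i0, 0) \<noteq> 0"
  shows "\<exists>c e. e < 2^n \<and> W = c \<cdot>\<^sub>m XZ n (i0, e)"
proof -
  have exp_less: "(2::nat)^k < 2^n" if "k < n" for k using that by simp
  have Z: "\<exists>x. W * XZ n (0, 2^k) = x \<cdot>\<^sub>m (XZ n (0, 2^k) * W)" if "k < n" for k
    using comm that by (simp add: labels_def)
  have support: "W $$ (i, j) = 0" if "i < 2^n" "j < 2^n" "i \<noteq> j XOR i0" for i j
  proof (rule ccontr)
    assume "W $$ (i, j) \<noteq> 0"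
    with commuting_Z_support[OF W Z that(1,2) _ i0(1) _ i0(2)] have "i XOR j = i0"
      by simp
    with that(3) show False by (metis xor.commute xor_xor_cancel)
  qed
  define w where "w j = W $$ (j XOR i0, j)" for j
  have X: "\<exists>x. W * XZ n (2^k, 0) = x \<cdot>\<^sub>m (XZ n (2^k, 0) * W)" if "k < n" for k
    using comm that by (simp add: labels_def)
  then obtain s where s: "\<And>k. k < n \<Longrightarrow> W * XZ n (2^k, 0) = s k \<cdot>\<^sub>m (XZ n (2^k, 0) * W)"
    by metis
  have flip: "w (j XOR 2^k) = s k * w j" if j: "j < 2^n" and k: "k < n" for j k
  proof -
    have lab: "(2^k, 0) \<in> labels n" using k by (simp add: labels_def)
    have i: "j XOR 2^k XOR i0 < 2^n" using j i0(1) exp_less[OF k] by (simp add: xor_less_exp)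
    show ?thesis
      using arg_cong[OF s[OF k], of "\<lambda>M. M $$ (j XOR 2^k XOR i0, j)"] i j W
      by (simp add: index_mult_XZ_right[OF W i j lab] index_mult_XZ_left[OF W i j lab] w_def
          xor.assoc xor.left_commute[of "2^k"])
  qed
  have sign: "s k = 1 \<or> s k = -1" if k: "k < n" for k
  proof -
    have "w 0 = s k * (s k * w 0)"
      using flip[OF _ k, of 0] flip[OF exp_less[OF k] k] by simp
    then have "s k * s k = 1" using i0(2) by (simp add: w_def mult.assoc[symmetric])
    then show ?thesis by (simp add: square_eq_1_iff)
  qed
  define e where "e = of_bits n (\<lambda>k. s k = -1)"
  have "W = w 0 \<cdot>\<^sub>m XZ n (i0, e)"
  proof (rule eq_matI)
    fix i j assume "i < dim_row (w 0 \<cdot>\<^sub>m XZ n (i0, e))" "j < dim_col (w 0 \<cdot>\<^sub>m XZ n (i0, e))"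
    then have i: "i < 2^n" and j: "j < 2^n" by auto
    show "W $$ (i, j) = (w 0 \<cdot>\<^sub>m XZ n (i0, e)) $$ (i, j)"
      using i j support flip_sign_imp_chi[of n w s, OF flip sign j]
      by (auto simp: index_XZ w_def e_def)
  qed (use W in auto)
  moreover have "e < 2^n" by (simp add: e_def of_bits_less)
  ultimately show ?thesis by blast
qed

lemma proj_pauli_if_commuting_XZ:
  assumes W: "unitary_mat (2^n) W"
    and comm: "\<And>v. v \<in> labels n \<Longrightarrow> \<exists>x. W * XZ n v = x \<cdot>\<^sub>m (XZ n v * W)"
  shows "proj_pauli n W"
proof -
  have Wc: "W \<in> carrier_mat (2^n) (2^n)" using W by (simp add: unitary_mat_def)
  have "\<exists>i0 < 2^n. W $$ (i0, 0) \<noteq> 0"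
  proof (rule ccontr)
    assume "\<not> ?thesis"
    moreover have "(adjoint_mat W * W) $$ (0, 0) = (\<Sum>l<2^n. adjoint_mat W $$ (0, l) * W $$ (l, 0))"
      using Wc by (intro index_mult_mat_sum) auto
    ultimately have "(adjoint_mat W * W) $$ (0, 0) = 0" by simp
    then show False using unitary_mat_left_inverse[OF W] by simp
  qed
  then obtain i0 where i0: "i0 < 2^n" "W $$ (i0, 0) \<noteq> 0" by blast
  then obtain c e where e: "e < 2^n" and eq: "W = c \<cdot>\<^sub>m XZ n (i0, e)"
    using commuting_XZ_imp_eq_smult_XZ[OF Wc comm] by blast
  have lab: "(i0, e) \<in> labels n" using i0 e by (simp add: labels_def)
  have "1\<^sub>m (2^n) = (c * cnj c) \<cdot>\<^sub>m (XZ n (i0, e) * adjoint_mat (XZ n (i0, e)))"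
    using W unfolding unitary_mat_def eq adjoint_mat_smult
    by (simp add: smult_mult_smult[of _ "2^n" "2^n" _ "2^n"])
  then have "1\<^sub>m (2^n) = (c * cnj c) \<cdot>\<^sub>m (1\<^sub>m (2^n) :: complex mat)"
    by (simp add: XZ_unitary[OF lab])
  then have "(1\<^sub>m (2^n) :: complex mat) $$ (0, 0) = ((c * cnj c) \<cdot>\<^sub>m 1\<^sub>m (2^n)) $$ (0, 0)"
    by simp
  then have "c * cnj c = 1" by simp
  then have "complex_of_real ((cmod c)^2) = 1" by (metis complex_norm_square of_real_power)
  then have "(cmod c)^2 = 1" by (simp only: of_real_eq_1_iff)
  then have "cmod c = 1" using norm_ge_zero[of c] by (auto simp: power2_eq_1_iff)
  moreover have "XZ n (i0, e) \<in> pauli_group n"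
    using smult_XZ_in_pauli_group[OF phases_closed(1) lab] by simp
  ultimately show ?thesis unfolding proj_pauli_def using eq by blast
qed

section \<open>The upper bound\<close>

lemma nilpotent_plus_label_action:
  assumes U: "U \<in> clifford_group n" and t: "proj_pauli n (U ^\<^sub>m (2^t))"
  shows "\<forall>v\<in>labels n. (plus_id (label_action n U) ^^ (2^t)) v = (0, 0)"
  using funpow_plus_id_exp2[OF xor_linear_label_action[OF U]] label_action_funpow_fixed[OF U t]
  by (simp add: plus_id_def)

lemma clifford_proj_pauli_pow_exp2:
  assumes U: "U \<in> clifford_group n" and t: "proj_pauli n (U ^\<^sub>m (2^t))" and m: "2 * n \<le> 2^m"
  shows "proj_pauli n (U ^\<^sub>m (2^m))"
proof -
  let ?f = "label_action n U"
  have f: "xor_linear n ?f" by (rule xor_linear_label_action[OF U])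
  have g: "xor_linear n (plus_id ?f)" by (rule xor_linear_plus_id[OF f])
  have nil: "\<forall>v\<in>labels n. (plus_id ?f ^^ (2 * n)) v = (0, 0)"
    by (rule xor_linear_nilpotent[OF g nilpotent_plus_label_action[OF U t]])
  have fixed: "(?f ^^ (2^m)) v = v" if v: "v \<in> labels n" for v
  proof -
    have "(2::nat)^m - 2 * n + 2 * n = 2^m" using m by simp
    then have "(plus_id ?f ^^ (2^m)) v = (plus_id ?f ^^ (2^m - 2 * n)) ((plus_id ?f ^^ (2 * n)) v)"
      by (metis comp_apply funpow_add)
    also have "\<dots> = (0, 0)" using nil v xor_linear_zero[OF xor_linear_funpow[OF g]] by simp
    finally show ?thesis using funpow_plus_id_exp2[OF f v] by (simp add: plus_id_def lxor_eq_zero_iff)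
  qed
  have W: "unitary_mat (2^n) (U ^\<^sub>m (2^m))"
    by (rule unitary_mat_pow[OF clifford_group_unitary[OF U]])
  show ?thesis
  proof (rule proj_pauli_if_commuting_XZ[OF W])
    fix v assume v: "v \<in> labels n"
    obtain x where "conj_mat (U ^\<^sub>m (2^m)) (XZ n v) = x \<cdot>\<^sub>m XZ n v"
      using conj_XZ_pow[OF U v, of "2^m"] fixed[OF v] unfolding conj_XZ_def by auto
    then show "\<exists>x. U ^\<^sub>m (2^m) * XZ n v = x \<cdot>\<^sub>m (XZ n v * U ^\<^sub>m (2^m))"
      using conj_mat_eq_smult_iff[OF W XZ_carrier XZ_carrier] by blast
  qed
qed

lemma proj_pauli_periodicity_le:
  assumes "U \<in> clifford_group n" "proj_pauli n (U ^\<^sub>m (2^t))" "2 * n \<le> 2^m"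
  shows "proj_pauli_periodicity n U \<le> m"
  unfolding proj_pauli_periodicity_def by (rule Least_le) (rule clifford_proj_pauli_pow_exp2[OF assms])

section \<open>A Clifford unitary attaining the bound\<close>

text \<open>The \<open>\<bbbF>\<^sub>2\<close>-linear map \<open>I + S\<close> on \<open>\<bbbF>\<^sub>2\<^sup>n\<close>, where \<open>S\<close> shifts every bit one position up and
  drops the top one; it is a single unipotent Jordan block.\<close>
definition shift_xor :: "nat \<Rightarrow> nat \<Rightarrow> nat" where
  "shift_xor n j = j XOR take_bit n (2 * j)"

lemma bit_shift_xor: "bit (shift_xor n j) k \<longleftrightarrow> (bit j k \<noteq> (k < n \<and> k \<noteq> 0 \<and> bit j (k - 1)))"
  by (auto simp: shift_xor_def bit_simps)

lemma shift_xor_less: "j < 2^n \<Longrightarrow> shift_xor n j < 2^n"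
  unfolding shift_xor_def by (rule xor_less_exp) auto

lemma shift_xor_xor: "shift_xor n (j XOR k) = shift_xor n j XOR shift_xor n k"
  by (rule bit_eqI) (auto simp: bit_shift_xor bit_xor_iff)

lemma shift_xor_0[simp]: "shift_xor n 0 = 0"
  by (simp add: shift_xor_def)

lemma shift_xor_eq_0_iff: "shift_xor n j = 0 \<longleftrightarrow> j = 0"
proof
  assume "shift_xor n j = 0"
  then have "\<not> bit j k" for k
  proof (induction k)
    case 0
    then show ?case using bit_shift_xor[of n j 0] by simp
  next
    case (Suc k)
    then show ?case using bit_shift_xor[of n j "Suc k"] by simp
  qed
  then show "j = 0" by (simp add: bit_eq_iff)
qed simp

lemma shift_xor_bij: "bij_betw (shift_xor n) {..<2^n} {..<2^n}"
proof -
  have "inj_on (shift_xor n) {..<2^n}"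
    by (rule inj_onI) (metis shift_xor_eq_0_iff shift_xor_xor xor_xor_cancel xor_self_eq)
  moreover have "shift_xor n ` {..<2^n} = {..<2^n}"
    using endo_inj_surj[of "{..<2^n}" "shift_xor n"] calculation shift_xor_less by auto
  ultimately show ?thesis by (simp add: bij_betw_def)
qed

definition shift_xor_inv :: "nat \<Rightarrow> nat \<Rightarrow> nat" where
  "shift_xor_inv n = inv_into {..<2^n} (shift_xor n)"

lemma shift_xor_inv:
  "y < 2^n \<Longrightarrow> shift_xor_inv n y < 2^n"
  "y < 2^n \<Longrightarrow> shift_xor n (shift_xor_inv n y) = y"
  "j < 2^n \<Longrightarrow> shift_xor_inv n (shift_xor n j) = j"
  using bij_betw_inv_into_left[OF shift_xor_bij] bij_betw_inv_into_right[OF shift_xor_bij]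
    bij_betwE[OF bij_betw_inv_into[OF shift_xor_bij]]
  by (auto simp: shift_xor_inv_def)

lemma shift_xor_inv_xor:
  assumes "y < 2^n" "z < 2^n"
  shows "shift_xor_inv n (y XOR z) = shift_xor_inv n y XOR shift_xor_inv n z"
proof -
  have "shift_xor n (shift_xor_inv n y XOR shift_xor_inv n z) = y XOR z"
    using assms by (simp add: shift_xor_xor shift_xor_inv)
  then show ?thesis
    using shift_xor_inv(3)[OF xor_less_exp[OF shift_xor_inv(1)[OF assms(1)] shift_xor_inv(1)[OF assms(2)]]]
    by simp
qed

definition top_phase :: "nat \<Rightarrow> nat \<Rightarrow> complex" where
  "top_phase n y = (if bit y (n - 1) then \<i> else 1)"

lemma top_phase_simps[simp]:
  "cnj (top_phase n y) * top_phase n y = 1" "top_phase n y * cnj (top_phase n y) = 1"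
  "top_phase n y \<noteq> 0" "top_phase n 0 = 1" "top_phase n y \<in> phases"
  by (auto simp: top_phase_def phases_def)

definition shift_clifford :: "nat \<Rightarrow> complex mat" where
  "shift_clifford n = mat (2^n) (2^n) (\<lambda>(i, j). if i = shift_xor n j then top_phase n i else 0)"

lemma shift_clifford_carrier[simp]: "shift_clifford n \<in> carrier_mat (2^n) (2^n)"
  and dim_shift_clifford[simp]: "dim_row (shift_clifford n) = 2^n" "dim_col (shift_clifford n) = 2^n"
  by (auto simp: shift_clifford_def)

lemma index_shift_clifford:
  "i < 2^n \<Longrightarrow> j < 2^n \<Longrightarrow> shift_clifford n $$ (i, j) = (if i = shift_xor n j then top_phase n i else 0)"
  by (simp add: shift_clifford_def)

lemma shift_clifford_unitary: "unitary_mat (2^n) (shift_clifford n)"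
proof -
  let ?U = "shift_clifford n"
  have "adjoint_mat ?U * ?U = 1\<^sub>m (2^n)"
  proof (rule eq_matI)
    fix i j assume "i < dim_row (1\<^sub>m (2^n) :: complex mat)" "j < dim_col (1\<^sub>m (2^n) :: complex mat)"
    then have i: "i < 2^n" and j: "j < 2^n" by auto
    have "(adjoint_mat ?U * ?U) $$ (i, j) = (\<Sum>l<2^n. adjoint_mat ?U $$ (i, l) * ?U $$ (l, j))"
      using i j by (intro index_mult_mat_sum) auto
    also have "\<dots> = (\<Sum>l<2^n. (if l = shift_xor n i then cnj (top_phase n (shift_xor n i)) else 0) * ?U $$ (l, j))"
      using i by (intro sum.cong refl) (simp add: index_shift_clifford)
    also have "\<dots> = cnj (top_phase n (shift_xor n i)) * ?U $$ (shift_xor n i, j)"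
      using shift_xor_less[OF i] by (rule sum_lessThan_mult_delta)
    also have "\<dots> = (if shift_xor n i = shift_xor n j then 1 else 0)"
      using j shift_xor_less[OF i] by (simp add: index_shift_clifford)
    also have "shift_xor n i = shift_xor n j \<longleftrightarrow> i = j"
      using shift_xor_inv(3)[OF i] shift_xor_inv(3)[OF j] by metis
    finally have "(adjoint_mat ?U * ?U) $$ (i, j) = (if i = j then 1 else 0)" .
    with i j show "(adjoint_mat ?U * ?U) $$ (i, j) = (1\<^sub>m (2^n) :: complex mat) $$ (i, j)" by simp
  qed auto
  then show ?thesis
    unfolding unitary_mat_def using mat_mult_left_right_inverse[of "adjoint_mat ?U" "2^n" ?U] by simp
qed

lemma top_phase_flip:
  assumes "k < n"
  shows "top_phase n ((y XOR 2^k) XOR a) * cnj (top_phase n (y XOR 2^k)) =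
    (if bit a (n - 1) \<and> k = n - 1 then -1 else 1) * (top_phase n (y XOR a) * cnj (top_phase n y))"
  using assms
  by (cases "bit y (n - 1)"; cases "bit a (n - 1)"; cases "k = n - 1") (auto simp: top_phase_def bit_simps)

lemma shift_clifford_mult_XZ:
  assumes ab: "(a, b) \<in> labels n"
  shows "\<exists>c < 2^n. shift_clifford n * XZ n (a, b) =
    top_phase n (shift_xor n a) \<cdot>\<^sub>m (XZ n (shift_xor n a, c) * shift_clifford n)"
proof -
  let ?a = "shift_xor n a" and ?U = "shift_clifford n"
  have a: "a < 2^n" using ab by (simp add: labels_def)
  define G where "G y = top_phase n (y XOR ?a) * cnj (top_phase n y) * chi n b (shift_xor_inv n y)" for y
  define s where "s k = (if bit ?a (n - 1) \<and> k = n - 1 then -1 else 1) * chi n b (shift_xor_inv n (2^k))" for k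
  have flip: "G (y XOR 2^k) = s k * G y" if y: "y < 2^n" and k: "k < n" for y k
  proof -
    have "chi n b (shift_xor_inv n (y XOR 2^k)) = chi n b (shift_xor_inv n y) * chi n b (shift_xor_inv n (2^k))"
      using y k by (simp add: shift_xor_inv_xor chi_xor_right)
    moreover have "G (y XOR 2^k) = top_phase n ((y XOR 2^k) XOR ?a) * cnj (top_phase n (y XOR 2^k)) *
        chi n b (shift_xor_inv n (y XOR 2^k))"
      by (simp add: G_def)
    ultimately show ?thesis unfolding top_phase_flip[OF k] by (simp add: G_def s_def mult_ac)
  qed
  have sign: "s k = 1 \<or> s k = -1" for k
    using chi_cases[of n b "shift_xor_inv n (2^k)"] by (auto simp: s_def)
  define c where "c = of_bits n (\<lambda>k. s k = -1)"
  have inv0: "shift_xor_inv n 0 = 0" using shift_xor_inv(3)[of 0 n] by simp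
  have G: "G y = top_phase n ?a * chi n c y" if "y < 2^n" for y
    using flip_sign_imp_chi[OF flip sign that] inv0 by (simp add: G_def c_def)
  have "?U * XZ n (a, b) = top_phase n ?a \<cdot>\<^sub>m (XZ n (?a, c) * ?U)"
  proof (rule eq_matI)
    fix i j assume "i < dim_row (top_phase n ?a \<cdot>\<^sub>m (XZ n (?a, c) * ?U))"
      "j < dim_col (top_phase n ?a \<cdot>\<^sub>m (XZ n (?a, c) * ?U))"
    then have i: "i < 2^n" and j: "j < 2^n" by auto
    have labs: "(?a, c) \<in> labels n"
      using shift_xor_less[OF a] by (simp add: labels_def c_def of_bits_less)
    let ?y = "shift_xor n j"
    have y: "?y < 2^n" by (rule shift_xor_less[OF j])
    have key: "top_phase n (?y XOR ?a) * chi n b j = top_phase n ?a * (chi n c ?y * top_phase n ?y)"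
    proof -
      have "top_phase n (?y XOR ?a) * chi n b j =
          top_phase n (?y XOR ?a) * chi n b j * (cnj (top_phase n ?y) * top_phase n ?y)"
        by simp
      also have "\<dots> = G ?y * top_phase n ?y"
        by (simp add: G_def shift_xor_inv(3)[OF j] mult_ac)
      finally show ?thesis by (simp add: G[OF y] mult_ac)
    qed
    have cond: "i = shift_xor n (j XOR a) \<longleftrightarrow> i XOR ?a = ?y"
      by (simp add: shift_xor_xor eq_xor_swap[of i] eq_commute[of ?y])
    have "(?U * XZ n (a, b)) $$ (i, j) = ?U $$ (i, j XOR a) * chi n b j"
      using index_mult_XZ_right[OF shift_clifford_carrier i j ab] by simp
    moreover have "(top_phase n ?a \<cdot>\<^sub>m (XZ n (?a, c) * ?U)) $$ (i, j) =
        top_phase n ?a * (chi n c (i XOR ?a) * ?U $$ (i XOR ?a, j))"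
      using index_mult_XZ_left[OF shift_clifford_carrier i j labs] i j by simp
    moreover have "?U $$ (i, j XOR a) * chi n b j =
        top_phase n ?a * (chi n c (i XOR ?a) * ?U $$ (i XOR ?a, j))"
    proof (cases "i XOR ?a = ?y")
      case True
      then have i': "i = ?y XOR ?a" by (metis xor_xor_cancel)
      have "?U $$ (i, j XOR a) = top_phase n i"
        using True cond i j a by (simp add: index_shift_clifford xor_less_exp)
      moreover have "?U $$ (i XOR ?a, j) = top_phase n ?y"
        using True j y by (simp add: index_shift_clifford)
      ultimately show ?thesis using key True by (simp add: i')
    next
      case False
      with cond i j a xor_less_exp[OF i shift_xor_less[OF a]] show ?thesis
        by (simp add: index_shift_clifford xor_less_exp)
    qed
    ultimately show "(?U * XZ n (a, b)) $$ (i, j) = (top_phase n ?a \<cdot>\<^sub>m (XZ n (?a, c) * ?U)) $$ (i, j)"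
      by simp
  qed auto
  moreover have "c < 2^n" by (simp add: c_def of_bits_less)
  ultimately show ?thesis by blast
qed

lemma shift_clifford_in_clifford_group: "shift_clifford n \<in> clifford_group n"
  unfolding clifford_group_def
proof (intro CollectI conjI ballI shift_clifford_unitary)
  let ?U = "shift_clifford n"
  fix P assume "P \<in> pauli_group n"
  then obtain w a b where w: "w \<in> phases" and ab: "(a, b) \<in> labels n" and P: "P = w \<cdot>\<^sub>m XZ n (a, b)"
    unfolding pauli_group_XZ by auto
  then obtain c where c: "c < 2^n"
    and "?U * XZ n (a, b) = top_phase n (shift_xor n a) \<cdot>\<^sub>m (XZ n (shift_xor n a, c) * ?U)"
    using shift_clifford_mult_XZ[OF ab] by blast
  then have "conj_mat ?U (XZ n (a, b)) = top_phase n (shift_xor n a) \<cdot>\<^sub>m XZ n (shift_xor n a, c)"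
    using conj_mat_eq_smult_iff[OF shift_clifford_unitary XZ_carrier XZ_carrier] by blast
  then have "?U * P * adjoint_mat ?U = (w * top_phase n (shift_xor n a)) \<cdot>\<^sub>m XZ n (shift_xor n a, c)"
    by (simp add: P conj_mat_def[symmetric] conj_mat_smult[of ?U "2^n"] smult_smult_mat)
  moreover have "(shift_xor n a, c) \<in> labels n" using ab c shift_xor_less by (auto simp: labels_def)
  ultimately show "?U * P * adjoint_mat ?U \<in> pauli_group n"
    using smult_XZ_in_pauli_group phases_closed(2)[OF w top_phase_simps(5)] by metis
qed

lemma funpow_shift_xor_xor: "(shift_xor n ^^ k) (j XOR a) = (shift_xor n ^^ k) j XOR (shift_xor n ^^ k) a"
  by (induction k) (auto simp: shift_xor_xor)

lemma funpow_shift_xor_0[simp]: "(shift_xor n ^^ k) 0 = 0"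
  by (induction k) auto

text \<open>Since \<open>S\<close> commutes with \<open>I\<close> and we are in characteristic 2, \<open>(I + S)\<^sup>2\<^sup>^\<^sup>s = I + S\<^sup>2\<^sup>^\<^sup>s\<close>.\<close>
lemma funpow_shift_xor_exp2: "(shift_xor n ^^ (2^s)) j = j XOR take_bit n (push_bit (2^s) j)"
proof (induction s arbitrary: j)
  case 0
  then show ?case by (simp add: shift_xor_def push_bit_eq_mult mult.commute)
next
  case (Suc s)
  have "(shift_xor n ^^ (2^Suc s)) j = (shift_xor n ^^ (2^s)) ((shift_xor n ^^ (2^s)) j)"
    by (simp only: power_Suc mult_2 funpow_add comp_apply)
  also have "\<dots> = j XOR take_bit n (push_bit (2^Suc s) j)"
    unfolding Suc.IH by (rule bit_eqI) (auto simp: bit_simps mult_2 diff_diff_left)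
  finally show ?case .
qed

lemma funpow_shift_xor_periodic: "n \<le> 2^s \<Longrightarrow> (shift_xor n ^^ (2^s)) j = j"
  unfolding funpow_shift_xor_exp2 by (rule bit_eqI) (auto simp: bit_simps)

definition orbit_phase :: "nat \<Rightarrow> nat \<Rightarrow> nat \<Rightarrow> complex" where
  "orbit_phase n k j = (\<Prod>l<k. top_phase n ((shift_xor n ^^ Suc l) j))"

lemma orbit_phase_add:
  "orbit_phase n (k + l) j = orbit_phase n k j * orbit_phase n l ((shift_xor n ^^ k) j)"
proof (induction l)
  case (Suc l)
  have "(shift_xor n ^^ Suc (k + l)) j = (shift_xor n ^^ Suc l) ((shift_xor n ^^ k) j)"
    by (metis add_Suc_right add.commute comp_apply funpow_add)
  with Suc.IH show ?case by (simp add: orbit_phase_def mult.assoc)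
qed (simp add: orbit_phase_def)

lemma index_shift_clifford_pow:
  assumes "i < 2^n" "j < 2^n"
  shows "(shift_clifford n ^\<^sub>m k) $$ (i, j) = (if i = (shift_xor n ^^ k) j then orbit_phase n k j else 0)"
  using assms
proof (induction k arbitrary: j)
  case 0
  then show ?case by (simp add: orbit_phase_def)
next
  case (Suc k)
  let ?U = "shift_clifford n" and ?y = "shift_xor n j"
  have y: "?y < 2^n" using shift_xor_less[OF Suc.prems(2)] .
  have "(?U ^\<^sub>m Suc k) $$ (i, j) = (\<Sum>l<2^n. (?U ^\<^sub>m k) $$ (i, l) * ?U $$ (l, j))"
    using Suc.prems by (simp only: pow_mat.simps) (intro index_mult_mat_sum, auto)
  also have "\<dots> = (\<Sum>l<2^n. (?U ^\<^sub>m k) $$ (i, l) * (if l = ?y then top_phase n ?y else 0))"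
    using Suc.prems by (intro sum.cong refl) (auto simp: index_shift_clifford)
  also have "\<dots> = (?U ^\<^sub>m k) $$ (i, ?y) * top_phase n ?y"
    using y by (rule sum_lessThan_mult_delta)
  also have "\<dots> = (if i = (shift_xor n ^^ k) ?y then orbit_phase n k ?y * top_phase n ?y else 0)"
    using Suc.IH[OF Suc.prems(1) y] by simp
  also have "orbit_phase n k ?y * top_phase n ?y = orbit_phase n (Suc k) j"
    using orbit_phase_add[of n 1 k j] by (simp add: orbit_phase_def funpow_swap1 mult.commute)
  finally show ?case by (simp add: funpow_swap1)
qed

text \<open>At the period \<open>2\<^sup>s \<ge> n\<close> of the permutation, squaring the orbit phase turns each \<open>\<i>\<close>
  into \<open>-1\<close>, making it a character of \<open>j\<close>.\<close>
lemma shift_clifford_pow_in_pauli_group: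
  assumes s: "n \<le> 2^s"
  shows "shift_clifford n ^\<^sub>m (2^Suc s) \<in> pauli_group n"
proof -
  let ?K = "(2::nat)^s"
  define g where "g j = orbit_phase n (2^Suc s) j" for j
  have g: "g j = (\<Prod>l<?K. signb (bit ((shift_xor n ^^ Suc l) j) (n - 1)))" for j
  proof -
    have "g j = orbit_phase n ?K j * orbit_phase n ?K j"
      using orbit_phase_add[of n ?K ?K j] funpow_shift_xor_periodic[OF s] by (simp add: g_def mult_2)
    also have "\<dots> = (\<Prod>l<?K. signb (bit ((shift_xor n ^^ Suc l) j) (n - 1)))"
      unfolding orbit_phase_def prod.distrib[symmetric]
      by (intro prod.cong refl) (simp add: top_phase_def signb_def)
    finally show ?thesis .
  qed
  have g_xor: "g (j XOR a) = g j * g a" for j a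
    unfolding g prod.distrib[symmetric]
    by (intro prod.cong refl) (simp add: funpow_shift_xor_xor bit_xor_iff signb_def del: funpow.simps)
  have g0: "g 0 = 1"
    by (simp add: g del: funpow.simps)
  have sign: "g (2^k) = 1 \<or> g (2^k) = -1" for k
    using g_xor[of "2^k" "2^k"] g0 by (simp add: square_eq_1_iff)
  define c where "c = of_bits n (\<lambda>k. g (2^k) = -1)"
  have g_chi: "g j = chi n c j" if "j < 2^n" for j
    using flip_sign_imp_chi[of n g "\<lambda>k. g (2^k)", OF _ sign that] g_xor g0
    by (simp add: c_def mult.commute)
  have "shift_clifford n ^\<^sub>m (2^Suc s) = XZ n (0, c)"
  proof (rule eq_matI)
    fix i j assume "i < dim_row (XZ n (0, c))" "j < dim_col (XZ n (0, c))"
    then have i: "i < 2^n" and j: "j < 2^n" by auto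
    have "(shift_xor n ^^ (2^Suc s)) j = j"
      using funpow_shift_xor_periodic[of n "Suc s"] s by simp
    then show "(shift_clifford n ^\<^sub>m (2^Suc s)) $$ (i, j) = XZ n (0, c) $$ (i, j)"
      using i j g_chi[OF j] by (simp add: index_shift_clifford_pow index_XZ g_def)
  qed auto
  moreover have "(0, c) \<in> labels n" by (simp add: labels_def c_def of_bits_less)
  ultimately show ?thesis using smult_XZ_in_pauli_group[OF phases_closed(1)] by fastforce
qed

lemma shift_xor_fixed:
  assumes a: "a < 2^n" and fixed: "shift_xor n a = a"
  shows "a = 0 \<or> a = 2^(n - 1)"
proof -
  have "\<not> bit a k" if "k \<noteq> n - 1" for k
  proof (cases "Suc k < n")
    case True
    then show ?thesis using arg_cong[OF fixed, of "\<lambda>x. bit x (Suc k)"] by (auto simp: bit_shift_xor)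
  next
    case False
    with that show ?thesis using bit_imp_less_exp[OF a, of k] by auto
  qed
  then have "bit a k \<longleftrightarrow> bit (if bit a (n - 1) then 2^(n - 1) else 0 :: nat) k" for k
    by (cases "k = n - 1") (auto simp: bit_exp_iff)
  then have "a = (if bit a (n - 1) then 2^(n - 1) else 0)"
    by (rule bit_eqI)
  then show ?thesis by metis
qed

lemma shift_xor_exp: "Suc k < n \<Longrightarrow> shift_xor n (2^k) = 2^k XOR 2^Suc k"
  by (rule bit_eqI) (auto simp: bit_shift_xor bit_xor_iff bit_exp_iff bit_double_iff)

text \<open>Only \<open>I\<close> and \<open>Z\<^sub>0\<close> commute projectively with \<^const>\<open>shift_clifford\<close>: on \<open>X\<close>-labels this
  is the one-dimensional fixed space of \<open>I + S\<close>, on \<open>Z\<close>-labels that of its transpose, and the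
  top phase \<open>\<i>\<close> rules out the mixed label \<open>(2\<^sup>n\<^sup>-\<^sup>1, b)\<close>.\<close>
lemma shift_clifford_commuting_XZ:
  assumes ab: "(a, b) \<in> labels n"
    and comm: "shift_clifford n * XZ n (a, b) = x \<cdot>\<^sub>m (XZ n (a, b) * shift_clifford n)"
  shows "a = 0 \<and> b < 2"
proof -
  let ?U = "shift_clifford n"
  have a: "a < 2^n" and b: "b < 2^n" using ab by (auto simp: labels_def)
  have entry: "?U $$ (i, j XOR a) * chi n b j = x * (chi n b (i XOR a) * ?U $$ (i XOR a, j))"
    if "i < 2^n" "j < 2^n" for i j
    using arg_cong[OF comm, of "\<lambda>M. M $$ (i, j)"] that
      index_mult_XZ_right[OF shift_clifford_carrier that ab]
      index_mult_XZ_left[OF shift_clifford_carrier that ab]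
    by simp
  have "shift_xor n a = a"
  proof (rule ccontr)
    assume "shift_xor n a \<noteq> a"
    then have "shift_xor n a XOR a \<noteq> 0" by (metis xor_self_eq xor_xor_cancel xor.left_neutral)
    then show False
      using entry[OF shift_xor_less[OF a], of 0] a shift_xor_less[OF a] xor_less_exp[OF shift_xor_less[OF a] a]
      by (simp add: index_shift_clifford)
  qed
  then have "a = 0 \<or> a = 2^(n - 1)" by (rule shift_xor_fixed[OF a])
  moreover have "a = 0"
  proof (rule ccontr)
    assume "a \<noteq> 0"
    with calculation have a': "a = 2^(n - 1)" "bit a (n - 1)" by (auto simp: bit_exp_iff)
    have "top_phase n a = x"
      using entry[OF a, of 0] a \<open>shift_xor n a = a\<close> by (simp add: index_shift_clifford)
    then have "x = \<i>" using a' by (simp add: top_phase_def)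
    moreover have "chi n b a = x * (chi n b a * top_phase n a)"
      using entry[of 0 a] a \<open>shift_xor n a = a\<close> by (simp add: index_shift_clifford)
    ultimately show False using a' by (simp add: top_phase_def)
  qed
  moreover have "b < 2"
  proof -
    have flip: "chi n b j = x * chi n b (shift_xor n j)" if j: "j < 2^n" for j
      using entry[OF shift_xor_less[OF j] j] \<open>a = 0\<close> j shift_xor_less[OF j]
      by (simp add: index_shift_clifford mult_ac)
    then have "x = 1" using flip[of 0] by simp
    have "\<not> bit b (Suc k)" for k
    proof (cases "Suc k < n")
      case True
      have "chi n b (2^k) = chi n b (2^k) * chi n b (2^Suc k)"
        using flip[of "2^k"] True \<open>x = 1\<close> by (simp add: shift_xor_exp chi_xor_right)
      then have "chi n b (2^Suc k) = 1" by simp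
      then show ?thesis using chi_exp[OF True, of b] by (simp add: signb_def split: if_splits)
    next
      case False
      then show ?thesis using bit_imp_less_exp[OF b, of "Suc k"] by auto
    qed
    then have "bit b k \<longleftrightarrow> bit (of_bool (bit b 0) :: nat) k" for k
      by (cases k) (auto simp: bit_0)
    then have "b = of_bool (bit b 0)" by (rule bit_eqI)
    moreover have "(of_bool (bit b 0) :: nat) < 2" by simp
    ultimately show ?thesis by metis
  qed
  ultimately show ?thesis by simp
qed

lemma card_iter_kernel_shift_clifford:
  "card (iter_kernel n (plus_id (label_action n (shift_clifford n))) 1) \<le> 2"
proof -
  let ?U = "shift_clifford n"
  have U: "?U \<in> clifford_group n" by (rule shift_clifford_in_clifford_group)
  have "iter_kernel n (plus_id (label_action n ?U)) 1 \<subseteq> {(0, 0), (0, 1)}"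
  proof
    fix v assume "v \<in> iter_kernel n (plus_id (label_action n ?U)) 1"
    then have v: "v \<in> labels n" and "label_action n ?U v = v"
      by (auto simp: iter_kernel_def plus_id_def lxor_eq_zero_iff)
    then obtain x where "conj_mat ?U (XZ n v) = x \<cdot>\<^sub>m XZ n v"
      using label_action(2)[OF U v] unfolding conj_XZ_def by auto
    moreover obtain a b where ab: "v = (a, b)" by fastforce
    ultimately have "?U * XZ n (a, b) = x \<cdot>\<^sub>m (XZ n (a, b) * ?U)"
      using conj_mat_eq_smult_iff[OF shift_clifford_unitary XZ_carrier XZ_carrier] by simp
    then have "a = 0 \<and> b < 2"
      using shift_clifford_commuting_XZ v ab by blast
    then show "v \<in> {(0, 0), (0, 1)}"
      using ab by (auto simp: less_2_cases_iff)
  qed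
  from card_mono[OF _ this] show ?thesis by simp
qed

lemma proj_pauli_shift_clifford_pow_imp_le:
  assumes "proj_pauli n (shift_clifford n ^\<^sub>m (2^t))"
  shows "2 * n \<le> 2^t"
proof -
  let ?U = "shift_clifford n"
  let ?f = "plus_id (label_action n ?U)"
  have U: "?U \<in> clifford_group n" by (rule shift_clifford_in_clifford_group)
  have f: "xor_linear n ?f" by (rule xor_linear_plus_id[OF xor_linear_label_action[OF U]])
  have "iter_kernel n ?f (2^t) = labels n"
    using nilpotent_plus_label_action[OF U assms] by (auto simp: iter_kernel_def)
  then have "(2::nat)^(2 * n) \<le> card (iter_kernel n ?f 1) ^ (2^t)"
    using card_iter_kernel_le[OF f, of "2^t"] by (simp add: card_labels)
  also have "\<dots> \<le> 2^(2^t)"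
    by (rule power_mono[OF card_iter_kernel_shift_clifford]) simp
  finally show ?thesis by simp
qed

lemma pauli_group_imp_proj_pauli: "A \<in> pauli_group n \<Longrightarrow> proj_pauli n A"
  unfolding proj_pauli_def by (intro exI[of _ 1] exI[of _ A]) simp

lemma shift_clifford_periodicity:
  assumes m: "2 * n \<le> 2^m" "2^m < 4 * n"
  shows "shift_clifford n ^\<^sub>m (2^m) \<in> pauli_group n"
    and "proj_pauli_periodicity n (shift_clifford n) = m"
    and "pauli_periodicity n (shift_clifford n) = m"
proof -
  let ?U = "shift_clifford n"
  have "m \<noteq> 0"
  proof
    assume "m = 0"
    with m have "2 * n \<le> 1" "1 < 4 * n" by simp_all
    then show False by presburger
  qed
  then obtain s where s: "m = Suc s" using not0_implies_Suc by blast
  then show pauli: "?U ^\<^sub>m (2^m) \<in> pauli_group n"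
    using m shift_clifford_pow_in_pauli_group[of n s] by simp
  have minimal: "m \<le> t" if "proj_pauli n (?U ^\<^sub>m (2^t))" for t
  proof -
    have "(2::nat)^m < 2^Suc t"
      using proj_pauli_shift_clifford_pow_imp_le[OF that] m by simp
    then show ?thesis by (simp only: power_strict_increasing_iff)
  qed
  show "proj_pauli_periodicity n ?U = m"
    unfolding proj_pauli_periodicity_def
    by (rule Least_equality) (auto intro: pauli_group_imp_proj_pauli[OF pauli] minimal)
  show "pauli_periodicity n ?U = m"
    unfolding pauli_periodicity_def
    by (rule Least_equality) (auto intro: pauli minimal pauli_group_imp_proj_pauli)
qed

lemma ceiling_log2:
  fixes N :: nat
  assumes N: "N \<ge> 1"
  shows "N \<le> 2 ^ nat \<lceil>log 2 N\<rceil>" and "2 ^ nat \<lceil>log 2 N\<rceil> < 2 * N"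
    and "int (nat \<lceil>log 2 N\<rceil>) = \<lceil>log 2 N\<rceil>"
proof -
  let ?m = "nat \<lceil>log 2 N\<rceil>"
  have "0 \<le> log 2 N" using N by simp
  then show m: "int ?m = \<lceil>log 2 N\<rceil>" by simp
  have real_m: "real ?m = real_of_int \<lceil>log 2 N\<rceil>" using m by (metis of_int_of_nat_eq)
  show "N \<le> 2^?m"
  proof (rule ccontr)
    assume "\<not> N \<le> 2^?m"
    then have "real ?m < log 2 N" by (intro less_log2_of_power) simp
    with real_m show False by linarith
  qed
  show "2^?m < 2 * N"
  proof (cases ?m)
    case (Suc k)
    have "2^k < N"
    proof (rule ccontr)
      assume "\<not> 2^k < N"
      then have "log 2 N \<le> real k" using N by (intro log2_of_power_le) auto
      with real_m Suc show False by linarith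
    qed
    with Suc show ?thesis by simp
  qed (use N in simp)
qed

theorem mainTheorem7:
  shows "(\<forall>n U. n \<ge> 1 \<longrightarrow> U \<in> clifford_group n \<longrightarrow>
            (\<exists>t. proj_pauli n (U ^\<^sub>m (2^t))) \<longrightarrow>
            int (proj_pauli_periodicity n U) \<le> \<lceil>log 2 (2 * real n)\<rceil>)
       \<and> (\<forall>n. n > 1 \<longrightarrow>
            (\<exists>U \<in> clifford_group n.
               proj_pauli_periodicity n U = nat \<lceil>log 2 (2 * real n)\<rceil>
             \<and> U ^\<^sub>m (2 ^ nat \<lceil>log 2 (2 * real n)\<rceil>) \<in> pauli_group n
             \<and> pauli_periodicity n U = nat \<lceil>log 2 (2 * real n)\<rceil>))"
proof (intro conjI allI impI)
  fix n :: nat and U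
  assume n: "n \<ge> 1" and U: "U \<in> clifford_group n" and "\<exists>t. proj_pauli n (U ^\<^sub>m (2^t))"
  then obtain t where t: "proj_pauli n (U ^\<^sub>m (2^t))" by blast
  have "2 * n \<le> 2 ^ nat \<lceil>log 2 (2 * real n)\<rceil>" "int (nat \<lceil>log 2 (2 * real n)\<rceil>) = \<lceil>log 2 (2 * real n)\<rceil>"
    using ceiling_log2[of "2 * n"] n by simp_all
  with proj_pauli_periodicity_le[OF U t] show "int (proj_pauli_periodicity n U) \<le> \<lceil>log 2 (2 * real n)\<rceil>"
    by (metis of_nat_le_iff)
next
  fix n :: nat assume "n > 1"
  then have "2 * n \<le> 2 ^ nat \<lceil>log 2 (2 * real n)\<rceil>" "2 ^ nat \<lceil>log 2 (2 * real n)\<rceil> < 4 * n"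
    using ceiling_log2[of "2 * n"] by simp_all
  then show "\<exists>U \<in> clifford_group n.
      proj_pauli_periodicity n U = nat \<lceil>log 2 (2 * real n)\<rceil>
    \<and> U ^\<^sub>m (2 ^ nat \<lceil>log 2 (2 * real n)\<rceil>) \<in> pauli_group n
    \<and> pauli_periodicity n U = nat \<lceil>log 2 (2 * real n)\<rceil>"
    using shift_clifford_in_clifford_group shift_clifford_periodicity by blast
qed

end
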